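(* Under Assumptions 1 and 2, for the accurate-gradient algorithm, for every $i\in\mathcal V$ and $t\in\{1,\dots,T\}$: (i) $\|x_i(t)-\bar x(t)\|\le\rho_1\lambda^t+\rho_2\sum_{s=0}^t\lambda^{t-s}\eta_s$; (ii) $\|x_i(t)-\bar x(t)\|^2\le\rho_3\lambda^t+\rho_4\sum_{s=0}^t\lambda^{t-s}\eta_s^2$; (iii) $\|x_i(t+1)-x_i(t)\|\le2\rho_1\lambda^t+2\rho_2\sum_{s=0}^t\lambda^{t-s}\eta_s+\rho_5\eta_t$; (iv) $\|y_i(t)-\bar y(t)\|\le\rho_6\sum_{s=0}^t\lambda^{t-s}\eta_s$; (v) $\|y_i(t)-\bar y(t)\|^2\le\rho_7\sum_{s=0}^t\lambda^{t-s}\eta_s^2$, where $\bar x(t)=\frac1n\sum_ix_i(t)$, $\bar y(t)=\frac1n\sum_iy_i(t)$, $\rho_1=\sqrt m\,n\kappa\mathcal C$, $\rho_2=\frac{\sqrt m\,n^{3/2}h\kappa_2\kappa_3\mathcal C+\sqrt m\,n\kappa_1\mathcal C}{\mu\lambda}$, $\rho_3=mn^2\kappa^2\mathcal C^2+\frac{2mn^{5/2}h\kappa\kappa_2\kappa_3\mathcal C^2+2mn^2\kappa\kappa_1\mathcal C^2}{\mu\lambda(1-\lambda)}$, $\rho_4=\frac{m(n^{3/2}h\kappa_2\kappa_3\mathcal C+n\kappa_1\mathcal C)^2}{\mu^2\lambda^2(1-\lambda)}$, $\rho_5=\frac{\sqrt n\,h\kappa_2\kappa_3+\kappa_1}{\mu}$,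 $\rho_6=\frac{\sqrt h\,n^{3/2}\mathcal C\kappa_2+\sqrt h\,n\mathcal C\kappa_2}{\lambda}$, $\rho_7=\frac{h(n^{3/2}\mathcal C\kappa_2+n\mathcal C\kappa_2)^2}{\lambda^2}$.
   Context: Network: Let $n\ge2$, $\mathcal V=\{1,\dots,n\}$. For $t=0,1,2,\dots$, $\mathcal G(t)=(\mathcal V,\mathcal E(t),A(t))$ is a digraph with weight matrix $A(t)=(a_{ij}(t))_{n\times n}$, where for some $\gamma>0$, $\gamma\le a_{ij}(t)\le1$ if $(j,i)\in\mathcal E(t)$ and $a_{ij}(t)=0$ otherwise; $\mathcal N_i(t)=\{j:(j,i)\in\mathcal E(t)\}$ and $i\in\mathcal N_i(t)$. Assumption 1: there is an integer $U>0$ such that for every $t\ge0$ the digraph $(\mathcal V,\bigcup_{k=tU}^{(t+1)U-1}\mathcal E(k))$ is strongly connected, and $A(t)1_n=A(t)^T1_n=1_n$ for all $t$. Constants: $\lambda=(1-\gamma^{(n-1)U})^{1/((n-1)U)}$ and $\mathcal C=2\lambda^{-1}(1+\gamma^{-(n-1)U})/(1-\gamma^{(n-1)U})$. Problem: $\Omega\subset\mathbb R^m$ is convex; for each $i\in\mathcal V$ and $t\ge0$, $f_i^t:\Omega\times\Omega\to\mathbb R$ and $g_i^t=(g_{i1}^t,\dots,g_{ih}^t)^T:\Omega\to\mathbb R^h$; $\mathcal X^t=\{x\in\Omega:\sum_ig_i^t(x)\le0\}$; $\nabla_2$ is the gradient in the second argument; $\nabla g_i^t(x)=[\nabla g_{i1}^t(x),\dots,\nabla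 g_{ih}^t(x)]\in\mathbb R^{m\times h}$. Assumption 2: (i) $f_i^t(x,\cdot)$ convex, each $g_{ik}^t$ convex (differentiable); (ii) $\mathcal X^t\neq\emptyset$, $\Omega$ compact with $\|x\|\le\kappa$ on $\Omega$; (iii) $\|\nabla_2f_i^t(x,y)\|\le\kappa_1$, $\|g_i^t(x)\|\le\kappa_2$, $\|\nabla g_{ik}^t(x)\|\le\kappa_3$ on $\Omega$. Algorithm: $\phi:\mathbb R^m\to\mathbb R$ differentiable and $\mu$-strongly convex ($\mu>0$), $\mathcal D_\phi(x,y)=\phi(x)-\phi(y)-\langle\nabla\phi(y),x-y\rangle$. Non-increasing step sizes $\zeta_t,\eta_t\in(0,1]$ with $\zeta_t\le\eta_t$; $x_i(0)\in\Omega$, $y_i(0)=0\in\mathbb R^h$; for $t\ge0$: $z_i(t)=\sum_{j\in\mathcal N_i(t)}a_{ij}(t)x_j(t)$; $x_i(t+1)=\arg\min_{x\in\Omega}\{\mathcal D_\phi(x,z_i(t))+\langle\zeta_t\nabla_2f_i^t(x_i(t),x_i(t))+\eta_t\nabla g_i^t(x_i(t))y_i(t),x\rangle\}$; $y_i(t+1)=[(1-\eta_t)\sum_{j\in\mathcal N_i(t)}a_{ij}(t)y_j(t)+\eta_tg_i^t(x_i(t))]_+$. $T$ is the time horizon. *)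

theory Defs
  imports "HOL-Analysis.Analysis"
begin

definition strongly_convex :: "real \<Rightarrow> ('a::real_inner \<Rightarrow> real) \<Rightarrow> bool" where
  "strongly_convex mu phi \<longleftrightarrow>
     (\<forall>x y u. 0 \<le> u \<longrightarrow> u \<le> 1 \<longrightarrow>
        phi (u *\<^sub>R x + (1 - u) *\<^sub>R y) \<le> u * phi x + (1 - u) * phi y - mu / 2 * u * (1 - u) * (norm (x - y))\<^sup>2)"

definition bregman :: "('a::real_inner \<Rightarrow> real) \<Rightarrow> ('a \<Rightarrow> 'a) \<Rightarrow> 'a \<Rightarrow> 'a \<Rightarrow> real" where
  "bregman phi dphi x y = phi x - phi y - inner (dphi y) (x - y)"

definition strongly_connected :: "nat set \<Rightarrow> (nat \<times> nat) set \<Rightarrow> bool" where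
  "strongly_connected V E \<longleftrightarrow> (\<forall>i\<in>V. \<forall>j\<in>V. (i, j) \<in> (E \<inter> (V \<times> V))\<^sup>*)"

definition pospart :: "real ^ 'h \<Rightarrow> real ^ 'h" where
  "pospart v = (\<chi> k. max (v $ k) 0)"

definition lam :: "real \<Rightarrow> nat \<Rightarrow> nat \<Rightarrow> real" where
  "lam \<gamma> n U = (1 - \<gamma> ^ ((n - 1) * U)) powr (1 / real ((n - 1) * U))"

definition Cconst :: "real \<Rightarrow> nat \<Rightarrow> nat \<Rightarrow> real" where
  "Cconst \<gamma> n U = 2 / lam \<gamma> n U * (1 + 1 / \<gamma> ^ ((n - 1) * U)) / (1 - \<gamma> ^ ((n - 1) * U))"

end

theory Submission
  imports Defs
begin

text \<open>Both the primal iterates \<open>x\<close> and the dual iterates \<open>y\<close> follow perturbed consensus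
  dynamics \<open>z(t + 1) = A(t) z(t) + e(t)\<close>. Strong connectivity over every window of \<open>U\<close> steps,
  self-loops and weights \<open>\<ge> \<gamma>\<close> make every product of \<open>(n - 1) U\<close> consecutive weight
  matrices (starting at a multiple of \<open>U\<close>) entrywise \<open>\<ge> \<delta> = \<gamma> ^ ((n - 1) U)\<close>; hence products of the
  doubly stochastic \<open>A(t)\<close> converge to the averaging matrix at the geometric rate \<open>\<lambda>\<close>. Unrolling the
  recursion, the deviation of an agent from the network average is at most the initial spread
  times \<open>\<lambda> ^ t\<close> plus every perturbation \<open>e(s)\<close> damped by \<open>\<lambda> ^ (t - s)\<close>. For \<open>x\<close> the perturbation is
  the mirror-descent step, of size \<open>O(\<eta> t)\<close> because \<open>\<phi>\<close> is strongly convex; for \<open>y\<close> it is the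
  projected dual step, also \<open>O(\<eta> t)\<close>. The squared bounds follow from Cauchy-Schwarz for
  discounted sums.\<close>

section \<open>Discounted sums\<close>

lemma sum_weighted_square_le:
  fixes w b :: "'a \<Rightarrow> real"
  assumes w: "\<And>s. s \<in> A \<Longrightarrow> w s \<ge> 0"
  shows "(\<Sum>s\<in>A. w s * b s)\<^sup>2 \<le> (\<Sum>s\<in>A. w s) * (\<Sum>s\<in>A. w s * (b s)\<^sup>2)"
proof -
  have "(\<Sum>s\<in>A. sqrt (w s) * (sqrt (w s) * b s))\<^sup>2
        \<le> (\<Sum>s\<in>A. (sqrt (w s))\<^sup>2) * (\<Sum>s\<in>A. (sqrt (w s) * b s)\<^sup>2)"
    by (rule Cauchy_Schwarz_ineq_sum)
  also have "(\<Sum>s\<in>A. sqrt (w s) * (sqrt (w s) * b s)) = (\<Sum>s\<in>A. w s * b s)"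
    by (intro sum.cong refl) (simp add: w mult.assoc[symmetric])
  also have "(\<Sum>s\<in>A. (sqrt (w s))\<^sup>2) = (\<Sum>s\<in>A. w s)"
    by (intro sum.cong refl) (simp add: w)
  also have "(\<Sum>s\<in>A. (sqrt (w s) * b s)\<^sup>2) = (\<Sum>s\<in>A. w s * (b s)\<^sup>2)"
    by (intro sum.cong refl) (simp add: w power_mult_distrib)
  finally show ?thesis .
qed

lemma sum_power_diff_lessThan_le:
  fixes l :: real
  assumes "0 \<le> l" "l < 1"
  shows "(\<Sum>s<t. l ^ (t - Suc s)) \<le> 1 / (1 - l)"
proof -
  have "(\<Sum>s<t. l ^ (t - Suc s)) = (\<Sum>s<t. l ^ s)" by (rule sum.nat_diff_reindex)
  also have "\<dots> = (1 - l ^ t) / (1 - l)" using assms by (simp add: sum_gp_strict)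
  also have "\<dots> \<le> 1 / (1 - l)" using assms by (intro divide_right_mono) auto
  finally show ?thesis .
qed

lemma sum_power_diff_atMost_le:
  fixes l :: real
  assumes "0 \<le> l" "l < 1"
  shows "(\<Sum>s=0..t. l ^ (t - s)) \<le> 1 / (1 - l)"
  using sum_power_diff_lessThan_le[OF assms, of "Suc t"]
  by (simp add: atLeast0AtMost lessThan_Suc_atMost)

lemma sum_discount_shift_le:
  fixes l :: real
  assumes l: "0 < l" and f: "\<And>s. f s \<ge> 0"
  shows "(\<Sum>s<t. l ^ (t - Suc s) * f s) \<le> (\<Sum>s=0..t. l ^ (t - s) * f s) / l"
proof -
  have "l * (\<Sum>s<t. l ^ (t - Suc s) * f s) = (\<Sum>s<t. l ^ (t - s) * f s)"
    unfolding sum_distrib_left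
    by (intro sum.cong refl) (simp add: mult.assoc[symmetric] Suc_diff_Suc flip: power_Suc)
  also have "\<dots> \<le> (\<Sum>s=0..t. l ^ (t - s) * f s)"
    by (rule sum_mono2) (use l f in auto)
  finally show ?thesis using l by (simp add: field_simps)
qed

lemma sum_discount_shift_square_le:
  fixes l :: real
  assumes l: "0 < l" "l < 1"
  shows "(\<Sum>s<t. l ^ (t - Suc s) * f s)\<^sup>2 \<le> (\<Sum>s=0..t. l ^ (t - s) * (f s)\<^sup>2) / (l * (1 - l))"
proof -
  have "(\<Sum>s<t. l ^ (t - Suc s) * f s)\<^sup>2
        \<le> (\<Sum>s<t. l ^ (t - Suc s)) * (\<Sum>s<t. l ^ (t - Suc s) * (f s)\<^sup>2)"
    by (rule sum_weighted_square_le) (use l in simp)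
  also have "\<dots> \<le> (1 / (1 - l)) * ((\<Sum>s=0..t. l ^ (t - s) * (f s)\<^sup>2) / l)"
    using l by (intro mult_mono sum_power_diff_lessThan_le sum_discount_shift_le sum_nonneg) auto
  finally show ?thesis by (simp add: mult.commute)
qed

lemma sum_discount_square_le:
  fixes l :: real
  assumes l: "0 \<le> l" "l < 1"
  shows "(\<Sum>s=0..t. l ^ (t - s) * f s)\<^sup>2 \<le> (\<Sum>s=0..t. l ^ (t - s) * (f s)\<^sup>2) / (1 - l)"
proof -
  have "(\<Sum>s=0..t. l ^ (t - s) * f s)\<^sup>2 \<le> (\<Sum>s=0..t. l ^ (t - s)) * (\<Sum>s=0..t. l ^ (t - s) * (f s)\<^sup>2)"
    by (rule sum_weighted_square_le) (use l in simp)
  also have "\<dots> \<le> (1 / (1 - l)) * (\<Sum>s=0..t. l ^ (t - s) * (f s)\<^sup>2)"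
    using l by (intro mult_right_mono sum_power_diff_atMost_le sum_nonneg) auto
  finally show ?thesis by simp
qed

lemma sum_discount_le_of_le_one:
  fixes l :: real
  assumes l: "0 \<le> l" "l < 1" and f: "\<And>s. f s \<le> 1"
  shows "(\<Sum>s=0..t. l ^ (t - s) * f s) \<le> 1 / (1 - l)"
proof -
  have "(\<Sum>s=0..t. l ^ (t - s) * f s) \<le> (\<Sum>s=0..t. l ^ (t - s))"
    using l f by (intro sum_mono) (simp add: mult_left_le)
  also have "\<dots> \<le> 1 / (1 - l)" using l by (rule sum_power_diff_atMost_le)
  finally show ?thesis .
qed

lemma square_le_of_discount_bound:
  fixes e p q l S S2 :: real
  assumes e: "0 \<le> e" "e \<le> p * l ^ t + q * S"
    and pq: "0 \<le> p" "0 \<le> q" and l: "0 \<le> l" "l < 1"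
    and S: "0 \<le> S" "S \<le> 1 / (1 - l)" "S\<^sup>2 \<le> S2 / (1 - l)"
  shows "e\<^sup>2 \<le> (p\<^sup>2 + 2 * p * q / (1 - l)) * l ^ t + q\<^sup>2 / (1 - l) * S2"
proof -
  have lt: "0 \<le> l ^ t" "l ^ t \<le> 1" using l by (auto simp: power_le_one)
  have "e\<^sup>2 \<le> (p * l ^ t + q * S)\<^sup>2" using e by (intro power_mono) auto
  also have "\<dots> = p\<^sup>2 * (l ^ t * l ^ t) + 2 * p * q * (l ^ t * S) + q\<^sup>2 * S\<^sup>2"
    by (simp add: power2_eq_square algebra_simps)
  also have "\<dots> \<le> p\<^sup>2 * l ^ t + 2 * p * q * (l ^ t * (1 / (1 - l))) + q\<^sup>2 * (S2 / (1 - l))"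
    using lt pq S by (intro add_mono mult_left_mono) (auto simp: mult_left_le)
  also have "\<dots> = (p\<^sup>2 + 2 * p * q / (1 - l)) * l ^ t + q\<^sup>2 / (1 - l) * S2"
    by (simp add: algebra_simps)
  finally show ?thesis .
qed

lemma abs_max_convex_comb_diff_le:
  fixes w g e :: real
  assumes w: "0 \<le> w" and e: "0 < e" "e \<le> 1"
  shows "\<bar>max ((1 - e) * w + e * g) 0 - w\<bar> \<le> e * (\<bar>w\<bar> + \<bar>g\<bar>)"
proof (cases "(1 - e) * w + e * g \<ge> 0")
  case True
  have "(1 - e) * w + e * g - w = e * (g - w)" by (simp add: algebra_simps)
  then have "\<bar>(1 - e) * w + e * g - w\<bar> = e * \<bar>g - w\<bar>" using e by (simp add: abs_mult)
  also have "\<dots> \<le> e * (\<bar>w\<bar> + \<bar>g\<bar>)" using e by (intro mult_left_mono) auto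
  finally show ?thesis using True by simp
next
  case False
  have "- (e * \<bar>g\<bar>) \<le> e * g" using e mult_left_mono[of "- \<bar>g\<bar>" g e] by simp
  then show ?thesis using False w e by (simp add: algebra_simps)
qed

lemma norm_vec_abs: "norm (\<chi> k. \<bar>w $ k\<bar>) = norm (w :: real ^ 'k)"
  by (rule antisym) (rule norm_le_componentwise_cart; simp)+

lemma norm_pospart_le: "norm (pospart w) \<le> norm w"
  by (rule norm_le_componentwise_cart) (simp add: pospart_def)

lemma norm_pospart_convex_comb_diff_le:
  fixes w g :: "real ^ 'k"
  assumes w: "\<And>k. 0 \<le> w $ k" and e: "0 < e" "e \<le> 1"
  shows "norm (pospart ((1 - e) *\<^sub>R w + e *\<^sub>R g) - w) \<le> e * (norm w + norm g)"
proof -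
  have "norm (pospart ((1 - e) *\<^sub>R w + e *\<^sub>R g) - w) \<le> norm (e *\<^sub>R ((\<chi> k. \<bar>w $ k\<bar>) + (\<chi> k. \<bar>g $ k\<bar>)))"
    by (rule norm_le_componentwise_cart)
      (use abs_max_convex_comb_diff_le[OF w e] e in \<open>simp add: pospart_def abs_mult\<close>)
  also have "\<dots> \<le> e * (norm w + norm g)"
    using e norm_triangle_ineq[of "\<chi> k. \<bar>w $ k\<bar>" "\<chi> k. \<bar>g $ k\<bar>"] by (simp add: norm_vec_abs)
  finally show ?thesis .
qed

section \<open>Bregman divergence\<close>

lemma le_of_le_plus_vanishing:
  fixes A B c :: real
  assumes c: "c \<ge> 0" and le: "\<And>u. 0 < u \<Longrightarrow> u \<le> 1 \<Longrightarrow> A \<le> B + u * c"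
  shows "A \<le> B"
proof (rule field_le_epsilon)
  fix e :: real assume e: "0 < e"
  define u where "u = min 1 (e / (c + 1))"
  have u: "0 < u" "u \<le> 1" using e c by (auto simp: u_def)
  have "u * c \<le> e / (c + 1) * c" using c by (intro mult_right_mono) (auto simp: u_def)
  also have "\<dots> \<le> e" using e c by (simp add: field_simps)
  finally show "A \<le> B + e" using le[OF u] by linarith
qed

lemma strongly_convex_on_line:
  fixes \<phi> :: "'a::real_inner \<Rightarrow> real"
  assumes sc: "strongly_convex \<mu> \<phi>"
  shows "convex_on UNIV (\<lambda>u. \<phi> (z + u *\<^sub>R (x - z)) - \<mu> / 2 * u\<^sup>2 * (norm (x - z))\<^sup>2)"
  unfolding convex_on_def
proof (intro conjI ballI allI impI)
  show "convex (UNIV :: real set)" by simp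
  fix p q u v :: real
  assume uv: "0 \<le> u" "0 \<le> v" "u + v = 1"
  define r where "r = norm (x - z)"
  define pa where "pa = z + p *\<^sub>R (x - z)"
  define pb where "pb = z + q *\<^sub>R (x - z)"
  have v: "v = 1 - u" using uv by simp
  have arg: "z + (u * p + (1 - u) * q) *\<^sub>R (x - z) = u *\<^sub>R pa + (1 - u) *\<^sub>R pb"
    by (simp add: pa_def pb_def algebra_simps)
  have "pa - pb = (p - q) *\<^sub>R (x - z)" by (simp add: pa_def pb_def algebra_simps)
  then have "(norm (pa - pb))\<^sup>2 = (p - q)\<^sup>2 * r\<^sup>2" by (simp add: r_def power_mult_distrib)
  then have "\<phi> (u *\<^sub>R pa + (1 - u) *\<^sub>R pb)
      \<le> u * \<phi> pa + (1 - u) * \<phi> pb - \<mu> / 2 * u * (1 - u) * ((p - q)\<^sup>2 * r\<^sup>2)"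
    using sc[unfolded strongly_convex_def, rule_format, of u pa pb] uv by simp
  moreover have "u * (\<phi> pa - \<mu> / 2 * p\<^sup>2 * r\<^sup>2) + (1 - u) * (\<phi> pb - \<mu> / 2 * q\<^sup>2 * r\<^sup>2)
      + \<mu> / 2 * (u * p + (1 - u) * q)\<^sup>2 * r\<^sup>2
      = u * \<phi> pa + (1 - u) * \<phi> pb - \<mu> / 2 * u * (1 - u) * ((p - q)\<^sup>2 * r\<^sup>2)"
    by (simp add: power2_eq_square field_simps)
  ultimately have "\<phi> (z + (u * p + (1 - u) * q) *\<^sub>R (x - z)) - \<mu> / 2 * (u * p + (1 - u) * q)\<^sup>2 * r\<^sup>2
      \<le> u * (\<phi> pa - \<mu> / 2 * p\<^sup>2 * r\<^sup>2) + (1 - u) * (\<phi> pb - \<mu> / 2 * q\<^sup>2 * r\<^sup>2)"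
    unfolding arg by linarith
  then show "\<phi> (z + (u *\<^sub>R p + v *\<^sub>R q) *\<^sub>R (x - z)) - \<mu> / 2 * (u *\<^sub>R p + v *\<^sub>R q)\<^sup>2 * (norm (x - z))\<^sup>2
      \<le> u * (\<phi> (z + p *\<^sub>R (x - z)) - \<mu> / 2 * p\<^sup>2 * (norm (x - z))\<^sup>2)
       + v * (\<phi> (z + q *\<^sub>R (x - z)) - \<mu> / 2 * q\<^sup>2 * (norm (x - z))\<^sup>2)"
    by (simp add: v r_def pa_def pb_def)
qed

lemma bregman_ge_strongly_convex:
  fixes \<phi> :: "'a::real_inner \<Rightarrow> real"
  assumes sc: "strongly_convex \<mu> \<phi>"
    and der: "\<And>u. (\<phi> has_derivative (\<lambda>w. inner (d\<phi> u) w)) (at u)"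
  shows "\<mu> / 2 * (norm (x - z))\<^sup>2 \<le> bregman \<phi> d\<phi> x z"
proof -
  define g where "g = (\<lambda>u. \<phi> (z + u *\<^sub>R (x - z)) - \<mu> / 2 * u\<^sup>2 * (norm (x - z))\<^sup>2)"
  have "((\<lambda>u. z + u *\<^sub>R (x - z)) has_derivative (\<lambda>u. u *\<^sub>R (x - z))) (at 0)"
    by (auto intro!: derivative_eq_intros)
  moreover have "(\<phi> has_derivative (\<lambda>w. inner (d\<phi> z) w)) (at (z + (0::real) *\<^sub>R (x - z)))"
    using der[of z] by simp
  ultimately have "((\<phi> \<circ> (\<lambda>u. z + u *\<^sub>R (x - z))) has_derivative ((\<lambda>w. inner (d\<phi> z) w) \<circ> (\<lambda>u. u *\<^sub>R (x - z)))) (at 0)"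
    by (rule diff_chain_at)
  then have "((\<lambda>u. \<phi> (z + u *\<^sub>R (x - z))) has_derivative (\<lambda>u. inner (d\<phi> z) (u *\<^sub>R (x - z)))) (at 0)"
    by (simp add: o_def)
  then have "((\<lambda>u. \<phi> (z + u *\<^sub>R (x - z))) has_field_derivative inner (d\<phi> z) (x - z)) (at 0)"
    unfolding has_field_derivative_def
    by (rule has_derivative_eq_rhs) (auto simp: fun_eq_iff mult.commute)
  then have dg: "(g has_field_derivative inner (d\<phi> z) (x - z)) (at 0 within UNIV)"
    unfolding g_def by (auto intro!: derivative_eq_intros)
  have "inner (d\<phi> z) (x - z) * (1 - 0) \<le> g 1 - g 0"
    using strongly_convex_on_line[OF sc, of z x]
    by (intro convex_on_imp_above_tangent[OF _ _ _ _ dg]) (auto simp: g_def)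
  then show ?thesis unfolding g_def bregman_def by simp
qed

lemma bregman_argmin_dist_le:
  fixes \<phi> :: "'a::real_inner \<Rightarrow> real"
  assumes sc: "strongly_convex \<mu> \<phi>" and mu: "\<mu> > 0"
    and der: "\<And>u. (\<phi> has_derivative (\<lambda>w. inner (d\<phi> u) w)) (at u)"
    and cvx: "convex \<Omega>" and z: "z \<in> \<Omega>" and xp: "xp \<in> \<Omega>"
    and opt: "\<forall>w\<in>\<Omega>. bregman \<phi> d\<phi> xp z + inner d xp \<le> bregman \<phi> d\<phi> w z + inner d w"
  shows "\<mu> * norm (xp - z) \<le> norm d"
proof -
  define F where "F = (\<lambda>w. bregman \<phi> d\<phi> w z + inner d w)"
  define r where "r = norm (z - xp)"
  have F_z: "F z = inner d z" unfolding F_def bregman_def by simp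
  have "F xp \<le> F z - \<mu> / 2 * r\<^sup>2"
  proof (rule le_of_le_plus_vanishing)
    fix u :: real assume u: "0 < u" "u \<le> 1"
    define wu where "wu = u *\<^sub>R z + (1 - u) *\<^sub>R xp"
    have "wu \<in> \<Omega>" unfolding wu_def using cvx z xp u by (intro convexD) auto
    then have opt_wu: "F xp \<le> F wu" using opt unfolding F_def by blast
    have "\<phi> wu \<le> u * \<phi> z + (1 - u) * \<phi> xp - \<mu> / 2 * u * (1 - u) * r\<^sup>2"
      using sc[unfolded strongly_convex_def, rule_format, of u z xp] u unfolding wu_def r_def by simp
    then have "F wu \<le> u * F z + (1 - u) * F xp - \<mu> / 2 * u * (1 - u) * r\<^sup>2"
      unfolding F_def bregman_def wu_def
      by (simp add: algebra_simps)
    with opt_wu have "u * F xp \<le> u * F z - \<mu> / 2 * u * (1 - u) * r\<^sup>2"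
      unfolding left_diff_distrib by linarith
    also have "\<dots> = u * (F z - \<mu> / 2 * r\<^sup>2 + u * (\<mu> / 2 * r\<^sup>2))"
      by (simp add: field_simps)
    finally have "u * F xp \<le> u * (F z - \<mu> / 2 * r\<^sup>2 + u * (\<mu> / 2 * r\<^sup>2))" .
    then show "F xp \<le> F z - \<mu> / 2 * r\<^sup>2 + u * (\<mu> / 2 * r\<^sup>2)" using u by simp
  qed (use mu in auto)
  moreover have "\<mu> / 2 * r\<^sup>2 \<le> bregman \<phi> d\<phi> xp z"
    using bregman_ge_strongly_convex[OF sc der, of xp z] unfolding r_def by (simp add: norm_minus_commute)
  ultimately have "\<mu> * r\<^sup>2 \<le> inner d (z - xp)" using F_z unfolding F_def by (simp add: inner_diff_right)
  also have "\<dots> \<le> norm d * r" unfolding r_def by (rule norm_cauchy_schwarz)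
  finally have "\<mu> * r * r \<le> norm d * r" by (simp add: power2_eq_square mult.assoc)
  then have "\<mu> * r \<le> norm d"
    using mu by (cases "r = 0") (auto simp: r_def)
  then show ?thesis by (simp add: r_def norm_minus_commute)
qed

section \<open>Products of doubly stochastic matrices\<close>

lemma rtrancl_leaves_set:
  assumes "(x, y) \<in> R\<^sup>*" "x \<in> S" "y \<notin> S"
  shows "\<exists>u v. (u, v) \<in> R \<and> u \<in> S \<and> v \<notin> S"
  using assms by (induction rule: rtrancl_induct) auto

lemma stochastic_average_range:
  fixes Q :: "nat \<Rightarrow> nat \<Rightarrow> real"
  assumes n: "n \<ge> 1" and d: "d \<ge> 0" and Q: "\<And>i j. i < n \<Longrightarrow> j < n \<Longrightarrow> Q i j \<ge> d"
    and Q_row: "(\<Sum>j<n. Q i j) = 1" and i: "i < n"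
    and v: "\<And>l. l < n \<Longrightarrow> lo \<le> v l \<and> v l \<le> lo + W" and W: "W \<ge> 0"
  shows "lo + d * (\<Sum>j<n. v j - lo) \<le> (\<Sum>j<n. Q i j * v j)"
    and "(\<Sum>j<n. Q i j * v j) \<le> lo + d * (\<Sum>j<n. v j - lo) + (1 - d) * W"
proof -
  have eq: "(\<Sum>j<n. Q i j * v j) = lo + (\<Sum>j<n. Q i j * (v j - lo))"
    using Q_row by (simp add: right_diff_distrib sum_subtractf sum_distrib_right[symmetric])
  have low: "(\<Sum>j<n. d * (v j - lo)) \<le> (\<Sum>j<n. Q i j * (v j - lo))"
    by (intro sum_mono mult_right_mono) (auto simp: Q i v)
  have "(\<Sum>j<n. Q i j * (v j - lo)) = (\<Sum>j<n. (Q i j - d) * (v j - lo)) + (\<Sum>j<n. d * (v j - lo))"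
    by (simp add: sum.distrib[symmetric] algebra_simps)
  also have "(\<Sum>j<n. (Q i j - d) * (v j - lo)) \<le> (\<Sum>j<n. (Q i j - d) * W)"
    by (intro sum_mono mult_left_mono) (use v Q i in fastforce)+
  also have "(\<Sum>j<n. (Q i j - d) * W) = (1 - n * d) * W"
    using Q_row by (simp add: sum_distrib_right[symmetric] sum_subtractf)
  also have "(1 - n * d) * W \<le> (1 - d) * W"
    using n d W by (intro mult_right_mono) (auto intro: mult_right_mono[of 1 "real n" d, simplified])
  finally have up: "(\<Sum>j<n. Q i j * (v j - lo)) \<le> (1 - d) * W + (\<Sum>j<n. d * (v j - lo))" by simp
  show "lo + d * (\<Sum>j<n. v j - lo) \<le> (\<Sum>j<n. Q i j * v j)"
    using low eq by (simp add: sum_distrib_left)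
  show "(\<Sum>j<n. Q i j * v j) \<le> lo + d * (\<Sum>j<n. v j - lo) + (1 - d) * W"
    using up eq by (simp add: sum_distrib_left)
qed

locale doubly_stochastic_sequence =
  fixes n U :: nat and \<gamma> :: real
    and E :: "nat \<Rightarrow> (nat \<times> nat) set" and a :: "nat \<Rightarrow> nat \<Rightarrow> nat \<Rightarrow> real"
  assumes n2: "n \<ge> 2"
    and gamma_pos: "\<gamma> > 0"
    and E_sub: "\<And>t. E t \<subseteq> {..<n} \<times> {..<n}"
    and a_edge: "\<And>t i j. (j, i) \<in> E t \<Longrightarrow> \<gamma> \<le> a i j t \<and> a i j t \<le> 1"
    and a_nonedge: "\<And>t i j. (j, i) \<notin> E t \<Longrightarrow> a i j t = 0"
    and self_loop: "\<And>t i. i < n \<Longrightarrow> (i, i) \<in> E t"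
    and U_pos: "U > 0"
    and conn: "\<And>t. strongly_connected {..<n} (\<Union>k\<in>{t * U..<(t + 1) * U}. E k)"
    and row_stoch: "\<And>t i. i < n \<Longrightarrow> (\<Sum>j<n. a i j t) = 1"
    and col_stoch: "\<And>t j. j < n \<Longrightarrow> (\<Sum>i<n. a i j t) = 1"
begin

lemma a_nonneg: "a i j t \<ge> 0"
  using a_edge a_nonedge gamma_pos by (cases "(j, i) \<in> E t") (force+)

lemma sum_in_neighbours:
  fixes v :: "nat \<Rightarrow> 'v::real_vector"
  shows "(\<Sum>j\<in>{j. (j, i) \<in> E t}. a i j t *\<^sub>R v j) = (\<Sum>j<n. a i j t *\<^sub>R v j)"
  by (rule sum.mono_neutral_left) (use E_sub a_nonedge in auto)

lemma norm_average_le: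
  fixes v :: "nat \<Rightarrow> 'v::real_normed_vector"
  assumes i: "i < n" and v: "\<And>j. j < n \<Longrightarrow> norm (v j) \<le> c"
  shows "norm (\<Sum>j<n. a i j t *\<^sub>R v j) \<le> c"
proof -
  have "norm (\<Sum>j<n. a i j t *\<^sub>R v j) \<le> (\<Sum>j<n. norm (a i j t *\<^sub>R v j))"
    by (rule norm_sum)
  also have "\<dots> \<le> (\<Sum>j<n. a i j t * c)"
    by (intro sum_mono) (auto simp: a_nonneg v intro!: mult_left_mono)
  also have "\<dots> = c" using row_stoch[OF i] by (simp add: sum_distrib_right[symmetric])
  finally show ?thesis .
qed

lemma average_minus:
  fixes v :: "nat \<Rightarrow> 'v::real_vector"
  assumes "i < n"
  shows "(\<Sum>j<n. a i j t *\<^sub>R v j) - c = (\<Sum>j<n. a i j t *\<^sub>R (v j - c))"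
  using row_stoch[OF assms] by (simp add: scaleR_diff_right sum_subtractf flip: scaleR_sum_left)

text \<open>\<open>Phi s L\<close> is the transition matrix \<open>A(s + L - 1) \<cdots> A(s)\<close> of the paper, where
  \<open>A(t) = (a i j t)\<close>.\<close>

fun consensus_iter :: "nat \<Rightarrow> nat \<Rightarrow> (nat \<Rightarrow> 'v::real_vector) \<Rightarrow> nat \<Rightarrow> 'v" where
  "consensus_iter s 0 v = v"
| "consensus_iter s (Suc L) v = (\<lambda>i. \<Sum>l<n. a i l (s + L) *\<^sub>R consensus_iter s L v l)"

definition Phi :: "nat \<Rightarrow> nat \<Rightarrow> nat \<Rightarrow> nat \<Rightarrow> real" where
  "Phi s L i j = consensus_iter s L (\<lambda>l. if l = j then 1 else 0) i"

lemma consensus_iter_add: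
  "consensus_iter s (L1 + L2) v = consensus_iter (s + L1) L2 (consensus_iter s L1 v)"
  by (induction L2) (simp_all add: add.assoc)

lemma consensus_iter_Phi:
  fixes v :: "nat \<Rightarrow> 'v::real_vector"
  assumes "i < n"
  shows "consensus_iter s L v i = (\<Sum>j<n. Phi s L i j *\<^sub>R v j)"
  using assms
proof (induction L arbitrary: i)
  case 0
  have "(\<Sum>j<n. Phi s 0 i j *\<^sub>R v j) = (\<Sum>j<n. (if j = i then v j else 0))"
    by (intro sum.cong) (auto simp: Phi_def)
  then show ?case using 0 by simp
next
  case (Suc L)
  have "consensus_iter s (Suc L) v i = (\<Sum>l<n. a i l (s + L) *\<^sub>R (\<Sum>j<n. Phi s L l j *\<^sub>R v j))"
    by (simp, intro sum.cong refl, simp add: Suc.IH)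
  also have "\<dots> = (\<Sum>l<n. \<Sum>j<n. (a i l (s + L) * Phi s L l j) *\<^sub>R v j)"
    by (simp add: scaleR_sum_right)
  also have "\<dots> = (\<Sum>j<n. \<Sum>l<n. (a i l (s + L) * Phi s L l j) *\<^sub>R v j)"
    by (rule sum.swap)
  also have "\<dots> = (\<Sum>j<n. Phi s (Suc L) i j *\<^sub>R v j)"
    by (simp add: Phi_def scaleR_sum_left)
  finally show ?case .
qed

lemma consensus_iter_range:
  fixes v :: "nat \<Rightarrow> real"
  assumes "\<And>l. l < n \<Longrightarrow> lo \<le> v l \<and> v l \<le> hi" "i < n"
  shows "lo \<le> consensus_iter s L v i \<and> consensus_iter s L v i \<le> hi"
  using assms(2)
proof (induction L arbitrary: i)
  case 0 then show ?case using assms by simp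
next
  case (Suc L)
  have "(\<Sum>l<n. a i l (s + L) * lo) \<le> (\<Sum>l<n. a i l (s + L) * consensus_iter s L v l)"
    and "(\<Sum>l<n. a i l (s + L) * consensus_iter s L v l) \<le> (\<Sum>l<n. a i l (s + L) * hi)"
    by (intro sum_mono mult_left_mono; use a_nonneg Suc.IH in force)+
  moreover have "(\<Sum>l<n. a i l (s + L) * c) = c" for c
    using row_stoch[OF Suc.prems] by (simp add: sum_distrib_right[symmetric])
  ultimately show ?case by simp
qed

lemma consensus_iter_nonneg:
  fixes v :: "nat \<Rightarrow> real"
  assumes "\<And>l. l < n \<Longrightarrow> v l \<ge> 0" "i < n"
  shows "consensus_iter s L v i \<ge> 0"
proof -
  define hi where "hi = Max (v ` {..<n})"
  have "\<And>l. l < n \<Longrightarrow> 0 \<le> v l \<and> v l \<le> hi" using assms(1) by (auto simp: hi_def)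
  then show ?thesis using consensus_iter_range[OF _ assms(2)] by blast
qed

lemma sum_consensus_iter:
  fixes v :: "nat \<Rightarrow> 'v::real_vector"
  shows "(\<Sum>i<n. consensus_iter s L v i) = (\<Sum>j<n. v j)"
proof (induction L)
  case (Suc L)
  have "(\<Sum>i<n. consensus_iter s (Suc L) v i) = (\<Sum>i<n. \<Sum>l<n. a i l (s + L) *\<^sub>R consensus_iter s L v l)"
    by simp
  also have "\<dots> = (\<Sum>l<n. \<Sum>i<n. a i l (s + L) *\<^sub>R consensus_iter s L v l)"
    by (rule sum.swap)
  also have "\<dots> = (\<Sum>l<n. consensus_iter s L v l)"
    by (intro sum.cong refl) (simp add: scaleR_sum_left[symmetric] col_stoch)
  finally show ?case using Suc.IH by simp
qed simp

lemma Phi_col_sum: "j < n \<Longrightarrow> (\<Sum>i<n. Phi s L i j) = 1"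
  unfolding Phi_def by (subst sum_consensus_iter) simp

lemma Phi_row_sum: "i < n \<Longrightarrow> (\<Sum>j<n. Phi s L i j) = 1"
  using consensus_iter_Phi[of i s L "\<lambda>_. 1::real"] consensus_iter_range[of 1 "\<lambda>_. 1" 1 i s L]
  by simp

text \<open>Every step keeps a self-loop of weight \<open>\<ge> \<gamma>\<close>, so a lower bound on \<open>S\<close> survives, damped by
  \<open>\<gamma>\<close> per step, on \<open>S\<close> and on every node reached from \<open>S\<close> in the meantime.\<close>

lemma consensus_iter_ge_on_reached:
  fixes v :: "nat \<Rightarrow> real"
  assumes v0: "\<And>l. l < n \<Longrightarrow> v l \<ge> 0" and vc: "\<And>l. l \<in> S \<Longrightarrow> v l \<ge> c"
    and c0: "c \<ge> 0" and S: "S \<subseteq> {..<n}"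
  shows "i \<in> S \<union> {i. \<exists>l\<in>S. \<exists>k. s \<le> k \<and> k < s + u \<and> (l, i) \<in> E k}
          \<Longrightarrow> consensus_iter s u v i \<ge> \<gamma> ^ u * c"
proof (induction u arbitrary: i)
  case 0 then show ?case using vc by auto
next
  case (Suc u)
  have i_n: "i < n" using Suc.prems S E_sub by blast
  have "\<exists>l<n. \<gamma> * (\<gamma> ^ u * c) \<le> a i l (s + u) * consensus_iter s u v l"
  proof (cases "i \<in> S \<union> {i. \<exists>l\<in>S. \<exists>k. s \<le> k \<and> k < s + u \<and> (l, i) \<in> E k}")
    case True
    have "\<gamma> \<le> a i i (s + u)" using a_edge self_loop[OF i_n] by blast
    with Suc.IH[OF True] show ?thesis using i_n gamma_pos c0
      by (intro exI[of _ i]) (auto intro!: mult_mono)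
  next
    case False
    then obtain l k where l: "l \<in> S" "s \<le> k" "k < s + Suc u" "(l, i) \<in> E k"
      using Suc.prems by blast
    with False have "k = s + u" by fastforce
    with l have "\<gamma> \<le> a i l (s + u)" using a_edge by blast
    moreover have "\<gamma> ^ u * c \<le> consensus_iter s u v l" using Suc.IH l(1) by blast
    ultimately show ?thesis using l S gamma_pos c0
      by (intro exI[of _ l]) (auto intro!: mult_mono)
  qed
  then obtain l where l: "l < n" "\<gamma> * (\<gamma> ^ u * c) \<le> a i l (s + u) * consensus_iter s u v l"
    by blast
  have "a i l (s + u) * consensus_iter s u v l \<le> (\<Sum>l<n. a i l (s + u) * consensus_iter s u v l)"
    by (rule member_le_sum) (use l consensus_iter_nonneg[OF v0] a_nonneg in auto)
  then show ?case using l by simp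
qed

lemma edge_leaving_in_window:
  assumes S: "S \<subseteq> {..<n}" "S \<noteq> {}" "S \<noteq> {..<n}"
  shows "\<exists>i. i \<notin> S \<and> (\<exists>l\<in>S. \<exists>k. w * U \<le> k \<and> k < w * U + U \<and> (l, i) \<in> E k)"
proof -
  obtain l0 where l0: "l0 \<in> S" using S by blast
  obtain i0 where i0: "i0 < n" "i0 \<notin> S" using S by blast
  let ?G = "\<Union>k\<in>{w * U..<(w + 1) * U}. E k"
  have "(l0, i0) \<in> (?G \<inter> {..<n} \<times> {..<n})\<^sup>*"
    using conn[of w] l0 S i0 unfolding strongly_connected_def by blast
  from rtrancl_leaves_set[OF this l0 i0(2)] obtain p q where
    pq: "(p, q) \<in> ?G" "p \<in> S" "q \<notin> S" by blast
  then have "\<exists>k. w * U \<le> k \<and> k < w * U + U \<and> (p, q) \<in> E k" by (auto simp: add.commute)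
  then show ?thesis using pq by blast
qed

text \<open>Strong connectivity of each window adds at least one node to the set.\<close>

lemma Phi_ge_on_growing_set:
  assumes j: "j < n"
  shows "\<exists>S \<subseteq> {..<n}. j \<in> S \<and> (r + 1 \<le> card S \<or> S = {..<n}) \<and>
           (\<forall>i\<in>S. Phi (w * U) (r * U) i j \<ge> \<gamma> ^ (r * U))"
proof (induction r)
  case 0
  show ?case using j by (intro exI[of _ "{j}"]) (auto simp: Phi_def)
next
  case (Suc r)
  then obtain S where S: "S \<subseteq> {..<n}" "j \<in> S" "r + 1 \<le> card S \<or> S = {..<n}"
    "\<forall>i\<in>S. Phi (w * U) (r * U) i j \<ge> \<gamma> ^ (r * U)" by blast
  define v where "v = consensus_iter (w * U) (r * U) (\<lambda>l. if l = j then (1::real) else 0)"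
  define s where "s = (w + r) * U"
  define S' where "S' = S \<union> {i. \<exists>l\<in>S. \<exists>k. s \<le> k \<and> k < s + U \<and> (l, i) \<in> E k}"
  have S'_sub: "S' \<subseteq> {..<n}" using S(1) E_sub unfolding S'_def by blast
  have "Phi (w * U) (Suc r * U) i j \<ge> \<gamma> ^ (Suc r * U)" if "i \<in> S'" for i
  proof -
    have "Suc r * U = r * U + U" "s = w * U + r * U" by (simp_all add: s_def distrib_right)
    then have "Phi (w * U) (Suc r * U) i j = consensus_iter s U v i"
      by (simp only: Phi_def v_def consensus_iter_add)
    moreover have "\<gamma> ^ U * \<gamma> ^ (r * U) \<le> consensus_iter s U v i"
      by (rule consensus_iter_ge_on_reached[OF _ _ _ S(1)])
        (use that gamma_pos S(4) in \<open>auto simp: S'_def v_def Phi_def intro: consensus_iter_nonneg\<close>)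
    ultimately show ?thesis by (simp add: power_add)
  qed
  moreover have "Suc r + 1 \<le> card S' \<or> S' = {..<n}"
  proof (cases "S = {..<n}")
    case True then show ?thesis using S'_sub unfolding S'_def by blast
  next
    case False
    obtain i where i: "i \<notin> S" "\<exists>l\<in>S. \<exists>k. (w + r) * U \<le> k \<and> k < (w + r) * U + U \<and> (l, i) \<in> E k"
      using edge_leaving_in_window[OF S(1) _ False, of "w + r"] S(2) by blast
    have "insert i S \<subseteq> S'" using i unfolding S'_def s_def by blast
    then have "card (insert i S) \<le> card S'"
      using S'_sub by (intro card_mono) (auto intro: finite_subset)
    moreover have "card (insert i S) = card S + 1"
      using i(1) S(1) by (simp add: finite_subset)
    ultimately show ?thesis using S(3) False by auto
  qed
  moreover have "j \<in> S'" unfolding S'_def using S(2) by blast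
  ultimately show ?case using S'_sub by blast
qed

definition B0 :: nat where "B0 = (n - 1) * U"

definition \<delta> :: real where "\<delta> = \<gamma> ^ B0"

lemma B0_ge: "B0 \<ge> U" "B0 > 0"
  using n2 U_pos unfolding B0_def by auto

lemma Phi_block_ge_delta:
  assumes "i < n" "j < n"
  shows "Phi (w * U) B0 i j \<ge> \<delta>"
proof -
  obtain S where S: "S \<subseteq> {..<n}" "(n - 1) + 1 \<le> card S \<or> S = {..<n}"
    "\<forall>i\<in>S. Phi (w * U) ((n - 1) * U) i j \<ge> \<gamma> ^ ((n - 1) * U)"
    using Phi_ge_on_growing_set[OF assms(2), of "n - 1" w] by blast
  have "S = {..<n}"
  proof (cases "S = {..<n}")
    case False
    then have "card S = card {..<n}"
      using S(1,2) n2 card_mono[of "{..<n}" S] by simp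
    then show ?thesis using S(1) by (intro card_subset_eq) auto
  qed
  then show ?thesis using S(3) assms unfolding B0_def \<delta>_def by auto
qed

text \<open>A node with an in-neighbour other than itself has two weights \<open>\<ge> \<gamma>\<close> in its row.\<close>

lemma gamma_le_half: "\<gamma> \<le> 1 / 2"
proof -
  let ?G = "\<Union>k\<in>{0 * U..<(0 + 1) * U}. E k"
  have "(0, 1) \<in> (?G \<inter> {..<n} \<times> {..<n})\<^sup>*"
    using conn[of 0] n2 unfolding strongly_connected_def by auto
  from rtrancl_leaves_set[OF this, of "{0}"] obtain k q where k: "(0, q) \<in> E k" "q < n" "q \<noteq> 0"
    by auto
  have "a q 0 k + a q q k = (\<Sum>l\<in>{0, q}. a q l k)" using k(3) by simp
  also have "\<dots> \<le> (\<Sum>l<n. a q l k)"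
    using k(2) n2 by (intro sum_mono2) (auto simp: a_nonneg)
  also have "\<dots> = 1" using row_stoch[OF k(2)] .
  finally show ?thesis using a_edge[OF k(1)] a_edge[OF self_loop[OF k(2)], of k] by linarith
qed

lemma delta_pos: "0 < \<delta>"
  unfolding \<delta>_def using gamma_pos by simp

lemma delta_le_half: "\<delta> \<le> 1 / 2"
  using power_decreasing[of 1 B0 \<gamma>] B0_ge gamma_le_half gamma_pos unfolding \<delta>_def by simp

lemma delta_B0_le_1: "\<delta> * B0 \<le> 1"
proof -
  have "\<gamma> ^ B0 \<le> (1 / 2) ^ B0" using gamma_le_half gamma_pos by (intro power_mono) auto
  moreover have "real B0 < 2 ^ B0"
    using less_exp[of B0] by (metis of_nat_less_iff of_nat_numeral of_nat_power)
  ultimately have "\<gamma> ^ B0 * B0 \<le> (1 / 2) ^ B0 * 2 ^ B0"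
    by (intro mult_mono) auto
  then show ?thesis unfolding \<delta>_def by (simp add: power_one_over)
qed

abbreviation lm :: real where "lm \<equiv> lam \<gamma> n U"

lemma lam_eq: "lm = (1 - \<delta>) powr (1 / real B0)"
  unfolding lam_def \<delta>_def B0_def ..

lemma lam_pos: "0 < lm"
  unfolding lam_eq using delta_le_half by simp

lemma lam_pow_B0: "lm ^ B0 = 1 - \<delta>"
  unfolding lam_eq using delta_le_half B0_ge by (subst powr_power) auto

lemma lam_less_1: "lm < 1"
proof (rule ccontr)
  assume "\<not> lm < 1"
  then have "1 \<le> lm ^ B0" by (intro one_le_power) simp
  then show False using lam_pow_B0 delta_pos by simp
qed

lemma delta_le_B0_one_minus_lam: "\<delta> \<le> B0 * (1 - lm)"
  using Bernoulli_inequality[of "lm - 1" B0] lam_pos lam_pow_B0 by (simp add: algebra_simps)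

text \<open>By \<open>Phi_block_ge_delta\<close>, each block is a stochastic matrix with entries \<open>\<ge> \<delta>\<close>, which
  shrinks the spread of a real vector by the factor \<open>1 - \<delta>\<close>.\<close>

lemma consensus_iter_blocks_spread:
  fixes v :: "nat \<Rightarrow> real"
  assumes v: "\<And>l. l < n \<Longrightarrow> lo \<le> v l \<and> v l \<le> lo + W" and W: "W \<ge> 0"
  shows "\<exists>lo'. \<forall>i<n. lo' \<le> consensus_iter (w * U) (q * B0) v i
                  \<and> consensus_iter (w * U) (q * B0) v i \<le> lo' + (1 - \<delta>) ^ q * W"
proof (induction q)
  case 0 then show ?case using v by (intro exI[of _ lo]) auto
next
  case (Suc q)
  then obtain lo' where lo': "\<forall>i<n. lo' \<le> consensus_iter (w * U) (q * B0) v i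
      \<and> consensus_iter (w * U) (q * B0) v i \<le> lo' + (1 - \<delta>) ^ q * W"
    by blast
  define u where "u = consensus_iter (w * U) (q * B0) v"
  define w' where "w' = w + q * (n - 1)"
  have e1: "Suc q * B0 = q * B0 + B0" by simp
  have e2: "w * U + q * B0 = w' * U" by (simp add: w'_def B0_def algebra_simps)
  have it: "consensus_iter (w * U) (Suc q * B0) v i = (\<Sum>j<n. Phi (w' * U) B0 i j * u j)"
    if "i < n" for i
    using consensus_iter_Phi[OF that, of "w' * U" B0 u] by (simp only: e1 consensus_iter_add e2 u_def) simp
  have W': "0 \<le> (1 - \<delta>) ^ q * W" using delta_le_half W by simp
  show ?case
  proof (intro exI allI impI)
    fix i assume i: "i < n"
    have u: "\<And>l. l < n \<Longrightarrow> lo' \<le> u l \<and> u l \<le> lo' + (1 - \<delta>) ^ q * W"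
      using lo' by (simp add: u_def)
    note bounds = stochastic_average_range[of n \<delta> "Phi (w' * U) B0" i lo' u,
        OF _ _ Phi_block_ge_delta Phi_row_sum[OF i] i u W']
    show "lo' + \<delta> * (\<Sum>j<n. u j - lo') \<le> consensus_iter (w * U) (Suc q * B0) v i
        \<and> consensus_iter (w * U) (Suc q * B0) v i \<le> lo' + \<delta> * (\<Sum>j<n. u j - lo') + (1 - \<delta>) ^ Suc q * W"
      unfolding it[OF i] using bounds n2 delta_pos by (simp add: mult.assoc)
  qed
qed

lemma Phi_column_spread:
  assumes j: "j < n"
  shows "\<exists>q. L \<le> (q + 2) * B0 \<and> (\<exists>lo. \<forall>i<n. lo \<le> Phi s L i j \<and> Phi s L i j \<le> lo + (1 - \<delta>) ^ q)"
proof -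
  define e where "e = (\<lambda>l. if l = j then (1::real) else 0)"
  have e01: "\<And>l. l < n \<Longrightarrow> 0 \<le> e l \<and> e l \<le> 0 + 1" unfolding e_def by auto
  define w where "w = (s + U - 1) div U"
  define s0 where "s0 = w * U"
  have "s + U - 1 = w * U + (s + U - 1) mod U" unfolding w_def by simp
  moreover have "(s + U - 1) mod U < U" using U_pos by simp
  ultimately have s0: "s \<le> s0" "s0 \<le> s + U - 1" unfolding s0_def by linarith+
  show ?thesis
  proof (cases "L \<le> s0 - s")
    case True
    then have "L \<le> 2 * B0" using s0 B0_ge(1) by linarith
    moreover have "\<forall>i<n. 0 \<le> Phi s L i j \<and> Phi s L i j \<le> 0 + (1 - \<delta>) ^ 0"
      unfolding Phi_def using consensus_iter_range[of 0 e 1] e01 by (simp add: e_def)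
    ultimately show ?thesis by (intro exI[of _ 0]) auto
  next
    case False
    define q where "q = (L - (s0 - s)) div B0"
    define r where "r = (L - (s0 - s)) mod B0"
    have L: "L = (s0 - s) + (q * B0 + r)"
      using False div_mult_mod_eq[of "L - (s0 - s)" B0] unfolding q_def r_def by linarith
    have r: "r < B0" unfolding r_def using B0_ge by simp
    define u1 where "u1 = consensus_iter s (s0 - s) e"
    have u1: "\<And>l. l < n \<Longrightarrow> 0 \<le> u1 l \<and> u1 l \<le> 0 + 1"
      unfolding u1_def using consensus_iter_range[of 0 e 1] e01 by simp
    obtain lo where lo: "\<forall>i<n. lo \<le> consensus_iter s0 (q * B0) u1 i
        \<and> consensus_iter s0 (q * B0) u1 i \<le> lo + (1 - \<delta>) ^ q"
      using consensus_iter_blocks_spread[of 0 u1 1 w q] u1 unfolding s0_def by auto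
    have "s + (s0 - s) = s0" using s0 by simp
    then have Phi_eq: "Phi s L i j = consensus_iter (s0 + q * B0) r (consensus_iter s0 (q * B0) u1) i" for i
      unfolding Phi_def L u1_def e_def[symmetric] by (simp only: consensus_iter_add)
    have "\<forall>i<n. lo \<le> Phi s L i j \<and> Phi s L i j \<le> lo + (1 - \<delta>) ^ q"
    proof (intro allI impI)
      fix i assume "i < n"
      show "lo \<le> Phi s L i j \<and> Phi s L i j \<le> lo + (1 - \<delta>) ^ q"
        unfolding Phi_eq by (rule consensus_iter_range) (use lo \<open>i < n\<close> in auto)
    qed
    moreover have "L \<le> (q + 2) * B0" using L r s0 B0_ge by (simp add: algebra_simps)
    ultimately show ?thesis by blast
  qed
qed

lemma abs_Phi_minus_inverse_n_le:
  assumes i: "i < n" and j: "j < n"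
  shows "\<bar>Phi s L i j - 1 / n\<bar> \<le> lm ^ L / (1 - \<delta>)\<^sup>2"
proof -
  obtain q lo where q: "L \<le> (q + 2) * B0"
    and lo: "\<forall>i<n. lo \<le> Phi s L i j \<and> Phi s L i j \<le> lo + (1 - \<delta>) ^ q"
    using Phi_column_spread[OF j, of L s] by blast
  have "(\<Sum>i<n. lo) \<le> (\<Sum>i<n. Phi s L i j)" "(\<Sum>i<n. Phi s L i j) \<le> (\<Sum>i<n. lo + (1 - \<delta>) ^ q)"
    by (intro sum_mono; use lo in auto)+
  then have "lo \<le> 1 / n" "1 / n \<le> lo + (1 - \<delta>) ^ q"
    using Phi_col_sum[OF j] n2 by (simp_all add: field_simps)
  then have "\<bar>Phi s L i j - 1 / n\<bar> \<le> (1 - \<delta>) ^ q" using lo i by auto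
  also have "(1 - \<delta>) ^ q = lm ^ (B0 * q) * (lm ^ (B0 * 2)) / (1 - \<delta>)\<^sup>2"
    using delta_le_half by (simp add: power_mult lam_pow_B0)
  also have "\<dots> \<le> lm ^ L / (1 - \<delta>)\<^sup>2"
    using q lam_pos lam_less_1 by (intro divide_right_mono power_decreasing) (auto simp: algebra_simps simp flip: power_add)
  finally show ?thesis .
qed

lemma consensus_iter_deviation:
  fixes v :: "nat \<Rightarrow> 'v::real_normed_vector"
  assumes i: "i < n" and v: "\<And>j. j < n \<Longrightarrow> norm (v j) \<le> c"
  shows "norm (consensus_iter s L v i - (1 / n) *\<^sub>R (\<Sum>j<n. v j)) \<le> n * (lm ^ L / (1 - \<delta>)\<^sup>2) * c"
proof -
  have "consensus_iter s L v i - (1 / n) *\<^sub>R (\<Sum>j<n. v j) = (\<Sum>j<n. (Phi s L i j - 1 / n) *\<^sub>R v j)"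
    by (simp add: consensus_iter_Phi[OF i] scaleR_diff_left sum_subtractf scaleR_sum_right)
  also have "norm \<dots> \<le> (\<Sum>j<n. \<bar>Phi s L i j - 1 / n\<bar> * norm (v j))"
    by (rule order_trans[OF norm_sum]) simp
  also have "\<dots> \<le> (\<Sum>j<n. (lm ^ L / (1 - \<delta>)\<^sup>2) * c)"
    using lam_pos by (intro sum_mono mult_mono abs_Phi_minus_inverse_n_le[OF i]) (auto simp: v)
  finally show ?thesis by simp
qed

lemma consensus_iter_unfold:
  fixes X e :: "nat \<Rightarrow> nat \<Rightarrow> 'v::real_vector"
  assumes rec: "\<And>i t. i < n \<Longrightarrow> X i (Suc t) = (\<Sum>l<n. a i l t *\<^sub>R X l t) + e i t"
  shows "i < n \<Longrightarrow> X i t = consensus_iter 0 t (\<lambda>j. X j 0) i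
                              + (\<Sum>s<t. consensus_iter (Suc s) (t - Suc s) (\<lambda>j. e j s) i)"
proof (induction t arbitrary: i)
  case (Suc t)
  have "X i (Suc t) = (\<Sum>l<n. a i l t *\<^sub>R consensus_iter 0 t (\<lambda>j. X j 0) l)
       + (\<Sum>l<n. \<Sum>s<t. a i l t *\<^sub>R consensus_iter (Suc s) (t - Suc s) (\<lambda>j. e j s) l) + e i t"
    using rec[OF Suc.prems] Suc.IH by (simp add: scaleR_add_right sum.distrib scaleR_sum_right)
  also have "(\<Sum>l<n. \<Sum>s<t. a i l t *\<^sub>R consensus_iter (Suc s) (t - Suc s) (\<lambda>j. e j s) l)
      = (\<Sum>s<t. \<Sum>l<n. a i l t *\<^sub>R consensus_iter (Suc s) (t - Suc s) (\<lambda>j. e j s) l)"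
    by (rule sum.swap)
  also have "\<dots> = (\<Sum>s<t. consensus_iter (Suc s) (Suc t - Suc s) (\<lambda>j. e j s) i)"
  proof (intro sum.cong refl)
    fix s assume "s \<in> {..<t}"
    then have "Suc t - Suc s = Suc (t - Suc s)" "Suc (s + (t - Suc s)) = t" by auto
    then show "(\<Sum>l<n. a i l t *\<^sub>R consensus_iter (Suc s) (t - Suc s) (\<lambda>j. e j s) l)
        = consensus_iter (Suc s) (Suc t - Suc s) (\<lambda>j. e j s) i"
      by simp
  qed
  finally show ?case by (simp add: add.assoc)
qed simp

lemma perturbed_consensus_deviation:
  fixes X e :: "nat \<Rightarrow> nat \<Rightarrow> 'v::real_normed_vector"
  assumes rec: "\<And>i t. i < n \<Longrightarrow> X i (Suc t) = (\<Sum>l<n. a i l t *\<^sub>R X l t) + e i t"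
    and X0: "\<And>j. j < n \<Longrightarrow> norm (X j 0) \<le> c"
    and e: "\<And>j s. j < n \<Longrightarrow> norm (e j s) \<le> c' s"
    and i: "i < n"
  shows "norm (X i t - (1 / n) *\<^sub>R (\<Sum>k<n. X k t))
           \<le> n / (1 - \<delta>)\<^sup>2 * (lm ^ t * c + (\<Sum>s<t. lm ^ (t - Suc s) * c' s))"
proof -
  define Y where "Y s = consensus_iter (Suc s) (t - Suc s) (\<lambda>j. e j s)" for s
  have X_t: "X k t = consensus_iter 0 t (\<lambda>j. X j 0) k + (\<Sum>s<t. Y s k)" if "k < n" for k
    unfolding Y_def by (rule consensus_iter_unfold[OF rec that])
  have "(\<Sum>k<n. X k t) = (\<Sum>k<n. consensus_iter 0 t (\<lambda>j. X j 0) k) + (\<Sum>k<n. \<Sum>s<t. Y s k)"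
    by (simp add: X_t sum.distrib)
  also have "\<dots> = (\<Sum>j<n. X j 0) + (\<Sum>s<t. \<Sum>j<n. e j s)"
    by (subst sum.swap) (simp add: Y_def sum_consensus_iter)
  finally have dev_eq: "X i t - (1 / n) *\<^sub>R (\<Sum>k<n. X k t)
      = (consensus_iter 0 t (\<lambda>j. X j 0) i - (1 / n) *\<^sub>R (\<Sum>j<n. X j 0))
        + (\<Sum>s<t. Y s i - (1 / n) *\<^sub>R (\<Sum>j<n. e j s))"
    by (simp add: X_t[OF i] sum_subtractf scaleR_add_right scaleR_sum_right)
  have "norm (X i t - (1 / n) *\<^sub>R (\<Sum>k<n. X k t))
      \<le> norm (consensus_iter 0 t (\<lambda>j. X j 0) i - (1 / n) *\<^sub>R (\<Sum>j<n. X j 0))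
        + (\<Sum>s<t. norm (Y s i - (1 / n) *\<^sub>R (\<Sum>j<n. e j s)))"
    unfolding dev_eq by (rule order_trans[OF norm_triangle_ineq add_left_mono[OF norm_sum]])
  also have "\<dots> \<le> n * (lm ^ t / (1 - \<delta>)\<^sup>2) * c + (\<Sum>s<t. n * (lm ^ (t - Suc s) / (1 - \<delta>)\<^sup>2) * c' s)"
    unfolding Y_def by (intro add_mono sum_mono consensus_iter_deviation[OF i]) (simp_all add: X0 e)
  also have "\<dots> = n / (1 - \<delta>)\<^sup>2 * (lm ^ t * c + (\<Sum>s<t. lm ^ (t - Suc s) * c' s))"
    by (simp add: algebra_simps sum_distrib_left)
  finally show ?thesis .
qed

lemma Cconst_ge: "2 / (\<delta> * (1 - \<delta>)) \<le> Cconst \<gamma> n U"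
proof -
  have "Cconst \<gamma> n U = 2 / lm * (1 + 1 / \<delta>) / (1 - \<delta>)"
    unfolding Cconst_def \<delta>_def B0_def ..
  moreover have "2 * (1 / \<delta>) / (1 - \<delta>) \<le> 2 / lm * (1 + 1 / \<delta>) / (1 - \<delta>)"
    using lam_pos lam_less_1 delta_pos delta_le_half
    by (intro divide_right_mono mult_mono) (auto simp: field_simps)
  ultimately show ?thesis by simp
qed

lemma Cconst_pos: "0 < Cconst \<gamma> n U"
proof -
  have "0 < 2 / (\<delta> * (1 - \<delta>))" using delta_pos delta_le_half by simp
  then show ?thesis using Cconst_ge by linarith
qed

lemma inverse_one_minus_delta_sq_le_Cconst: "1 / (1 - \<delta>)\<^sup>2 \<le> Cconst \<gamma> n U"
proof -
  have "1 / (1 - \<delta>)\<^sup>2 = (1 / (1 - \<delta>)) * (1 / (1 - \<delta>))" by (simp add: power2_eq_square)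
  also have "\<dots> \<le> (2 / \<delta>) * (1 / (1 - \<delta>))"
    using delta_pos delta_le_half by (intro mult_right_mono) (auto simp: field_simps)
  also have "\<dots> \<le> Cconst \<gamma> n U" using Cconst_ge by simp
  finally show ?thesis .
qed

lemma n_div_one_minus_delta_sq_le_Cconst: "n / (1 - \<delta>)\<^sup>2 \<le> n * Cconst \<gamma> n U"
  using mult_left_mono[OF inverse_one_minus_delta_sq_le_Cconst, of "real n"] by simp

lemma inverse_one_minus_delta_sq_sq_le_Cconst_sq:
  "(1 / (1 - \<delta>)\<^sup>2)\<^sup>2 * lm \<le> (Cconst \<gamma> n U)\<^sup>2 * (1 - lm)"
proof -
  have D4: "1 / (1 - \<delta>)\<^sup>2 \<le> 4"
    using power_mono[of "1 / 2" "1 - \<delta>" 2] delta_le_half by (simp add: field_simps)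
  have "\<delta>\<^sup>2 \<le> \<delta> * (B0 * (1 - lm))"
    unfolding power2_eq_square using delta_pos delta_le_B0_one_minus_lam by (intro mult_left_mono) auto
  also have "\<dots> \<le> 1 - lm"
    using delta_B0_le_1 lam_less_1 mult_right_mono[of "\<delta> * B0" 1 "1 - lm"] by (simp add: mult.assoc)
  finally have dd: "\<delta>\<^sup>2 \<le> 1 - lm" .
  have "(1 / (1 - \<delta>)\<^sup>2)\<^sup>2 * lm \<le> (1 / (1 - \<delta>)\<^sup>2)\<^sup>2"
    using lam_pos lam_less_1 by (simp add: mult_left_le)
  also have "\<dots> \<le> 4 * (1 / (1 - \<delta>)\<^sup>2)"
    using D4 unfolding power2_eq_square[of "1 / (1 - \<delta>)\<^sup>2"] by (intro mult_right_mono) auto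
  also have "\<dots> = (2 / (\<delta> * (1 - \<delta>)))\<^sup>2 * \<delta>\<^sup>2"
    using delta_pos by (simp add: power_divide power_mult_distrib)
  also have "\<dots> \<le> (Cconst \<gamma> n U)\<^sup>2 * (1 - lm)"
    using Cconst_ge dd delta_pos delta_le_half by (intro mult_mono power_mono) auto
  finally show ?thesis .
qed

end

section \<open>The primal-dual algorithm\<close>

lemma powr_three_halves: "0 \<le> (x::real) \<Longrightarrow> x powr (3 / 2) = x * sqrt x"
  using powr_add[of x 1 "1 / 2"] by (simp add: powr_half_sqrt)

lemma powr_five_halves: "0 \<le> (x::real) \<Longrightarrow> x powr (5 / 2) = x * (x powr (3 / 2))"
  using powr_add[of x 1 "3 / 2"] by simp

locale distributed_primal_dual = doubly_stochastic_sequence n U \<gamma> E a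
  for n U :: nat and \<gamma> :: real and E :: "nat \<Rightarrow> (nat \<times> nat) set"
    and a :: "nat \<Rightarrow> nat \<Rightarrow> nat \<Rightarrow> real" +
  fixes \<Omega> :: "(real ^ 'm) set"
    and df :: "nat \<Rightarrow> nat \<Rightarrow> real ^ 'm \<Rightarrow> real ^ 'm \<Rightarrow> real ^ 'm"
    and g :: "nat \<Rightarrow> nat \<Rightarrow> real ^ 'm \<Rightarrow> real ^ 'h"
    and dg :: "nat \<Rightarrow> nat \<Rightarrow> 'h \<Rightarrow> real ^ 'm \<Rightarrow> real ^ 'm"
    and \<phi> :: "real ^ 'm \<Rightarrow> real" and d\<phi> :: "real ^ 'm \<Rightarrow> real ^ 'm"
    and \<zeta> \<eta> :: "nat \<Rightarrow> real"
    and x :: "nat \<Rightarrow> nat \<Rightarrow> real ^ 'm" and y :: "nat \<Rightarrow> nat \<Rightarrow> real ^ 'h"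
    and \<mu> \<kappa> \<kappa>1 \<kappa>2 \<kappa>3 :: real
  assumes Omega_convex: "convex \<Omega>"
    and kappa: "\<And>u. u \<in> \<Omega> \<Longrightarrow> norm u \<le> \<kappa>"
    and kappa1: "\<And>i t u v. i < n \<Longrightarrow> u \<in> \<Omega> \<Longrightarrow> v \<in> \<Omega> \<Longrightarrow> norm (df i t u v) \<le> \<kappa>1"
    and kappa2: "\<And>i t u. i < n \<Longrightarrow> u \<in> \<Omega> \<Longrightarrow> norm (g i t u) \<le> \<kappa>2"
    and kappa3: "\<And>i t k u. i < n \<Longrightarrow> u \<in> \<Omega> \<Longrightarrow> norm (dg i t k u) \<le> \<kappa>3"
    and phi_diff: "\<And>u. (\<phi> has_derivative (\<lambda>w. inner (d\<phi> u) w)) (at u)"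
    and mu_pos: "\<mu> > 0"
    and phi_sc: "strongly_convex \<mu> \<phi>"
    and zeta_range: "\<And>t. 0 < \<zeta> t \<and> \<zeta> t \<le> 1"
    and eta_range: "\<And>t. 0 < \<eta> t \<and> \<eta> t \<le> 1"
    and zeta_le_eta: "\<And>t. \<zeta> t \<le> \<eta> t"
    and x0: "\<And>i. i < n \<Longrightarrow> x i 0 \<in> \<Omega>"
    and y0: "\<And>i. i < n \<Longrightarrow> y i 0 = 0"
    and x_step: "\<And>i t. i < n \<Longrightarrow>
        x i (Suc t) \<in> \<Omega> \<and>
        (\<forall>w\<in>\<Omega>.
          bregman \<phi> d\<phi> (x i (Suc t)) (\<Sum>j\<in>{j. (j, i) \<in> E t}. a i j t *\<^sub>R x j t)
            + inner (\<zeta> t *\<^sub>R df i t (x i t) (x i t)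
                     + \<eta> t *\<^sub>R (\<Sum>k\<in>UNIV. (y i t $ k) *\<^sub>R dg i t k (x i t))) (x i (Suc t))
          \<le> bregman \<phi> d\<phi> w (\<Sum>j\<in>{j. (j, i) \<in> E t}. a i j t *\<^sub>R x j t)
            + inner (\<zeta> t *\<^sub>R df i t (x i t) (x i t)
                     + \<eta> t *\<^sub>R (\<Sum>k\<in>UNIV. (y i t $ k) *\<^sub>R dg i t k (x i t))) w)"
    and y_step: "\<And>i t. i < n \<Longrightarrow>
        y i (Suc t) = pospart ((1 - \<eta> t) *\<^sub>R (\<Sum>j\<in>{j. (j, i) \<in> E t}. a i j t *\<^sub>R y j t)
                                + \<eta> t *\<^sub>R g i t (x i t))"
begin

definition xbar :: "nat \<Rightarrow> real ^ 'm" where "xbar t = (1 / real n) *\<^sub>R (\<Sum>i<n. x i t)"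

definition ybar :: "nat \<Rightarrow> real ^ 'h" where "ybar t = (1 / real n) *\<^sub>R (\<Sum>i<n. y i t)"

lemma eta_nonneg: "0 \<le> \<eta> t"
  using eta_range[of t] by simp

lemma x_in_Omega: "i < n \<Longrightarrow> x i t \<in> \<Omega>"
  by (cases t) (use x0 x_step in auto)

lemma average_x_in_Omega: "i < n \<Longrightarrow> (\<Sum>l<n. a i l t *\<^sub>R x l t) \<in> \<Omega>"
  by (rule convex_sum) (use Omega_convex row_stoch a_nonneg x_in_Omega in auto)

lemma kappa_nonneg: "0 \<le> \<kappa>" "0 \<le> \<kappa>1" "0 \<le> \<kappa>2" "0 \<le> \<kappa>3"
proof -
  have "0 < n" and x00: "x 0 0 \<in> \<Omega>" using n2 x0[of 0] by auto
  then show "0 \<le> \<kappa>" "0 \<le> \<kappa>1" "0 \<le> \<kappa>2" "0 \<le> \<kappa>3"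
    using kappa[OF x00] kappa1[OF _ x00 x00, of 0 0] kappa2[OF _ x00, of 0 0]
      kappa3[OF _ x00, of 0 0 undefined] norm_ge_zero order_trans by blast+
qed

lemma y_nonneg_bounded: "i < n \<Longrightarrow> norm (y i t) \<le> \<kappa>2 \<and> (\<forall>k. 0 \<le> y i t $ k)"
proof (induction t arbitrary: i)
  case 0 then show ?case using y0 kappa_nonneg by simp
next
  case (Suc t)
  define w where "w = (\<Sum>l<n. a i l t *\<^sub>R y l t)"
  have "norm w \<le> \<kappa>2" unfolding w_def using Suc.IH by (intro norm_average_le Suc.prems) blast
  moreover have "norm (g i t (x i t)) \<le> \<kappa>2" using kappa2 x_in_Omega Suc.prems by blast
  ultimately have "norm ((1 - \<eta> t) *\<^sub>R w + \<eta> t *\<^sub>R g i t (x i t)) \<le> (1 - \<eta> t) * \<kappa>2 + \<eta> t * \<kappa>2"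
    using eta_range[of t] by (intro order_trans[OF norm_triangle_ineq] add_mono) (simp_all add: mult_left_mono)
  moreover have "y i (Suc t) = pospart ((1 - \<eta> t) *\<^sub>R w + \<eta> t *\<^sub>R g i t (x i t))"
    using y_step[OF Suc.prems] unfolding sum_in_neighbours w_def .
  ultimately show ?case
    using norm_pospart_le order_trans by (fastforce simp: pospart_def algebra_simps)
qed

lemma x_step_error:
  assumes i: "i < n"
  shows "norm (x i (Suc s) - (\<Sum>l<n. a i l s *\<^sub>R x l s)) \<le> \<eta> s * (\<kappa>1 + CARD('h) * \<kappa>2 * \<kappa>3) / \<mu>"
proof -
  define d where "d = \<zeta> s *\<^sub>R df i s (x i s) (x i s) + \<eta> s *\<^sub>R (\<Sum>k\<in>UNIV. (y i s $ k) *\<^sub>R dg i s k (x i s))"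
  have "\<mu> * norm (x i (Suc s) - (\<Sum>l<n. a i l s *\<^sub>R x l s)) \<le> norm d"
    using x_step[OF i, of s] average_x_in_Omega[OF i]
    by (intro bregman_argmin_dist_le[OF phi_sc mu_pos phi_diff Omega_convex])
      (simp_all add: d_def sum_in_neighbours)
  also have "norm d \<le> \<eta> s * (\<kappa>1 + CARD('h) * \<kappa>2 * \<kappa>3)"
  proof -
    have "norm ((y i s $ k) *\<^sub>R dg i s k (x i s)) \<le> \<kappa>2 * \<kappa>3" for k
    proof -
      have "\<bar>y i s $ k\<bar> \<le> \<kappa>2"
        using y_nonneg_bounded[OF i, of s] component_le_norm_cart[of "y i s" k] by simp
      then show ?thesis
        using kappa3[OF i x_in_Omega[OF i]] kappa_nonneg by (simp add: mult_mono)
    qed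
    then have "norm (\<Sum>k\<in>UNIV. (y i s $ k) *\<^sub>R dg i s k (x i s)) \<le> (\<Sum>k\<in>(UNIV::'h set). \<kappa>2 * \<kappa>3)"
      by (intro order_trans[OF norm_sum sum_mono])
    also have "\<dots> = CARD('h) * \<kappa>2 * \<kappa>3" by simp
    finally have "norm (\<Sum>k\<in>UNIV. (y i s $ k) *\<^sub>R dg i s k (x i s)) \<le> CARD('h) * \<kappa>2 * \<kappa>3" .
    moreover have "norm (df i s (x i s) (x i s)) \<le> \<kappa>1" using kappa1 i x_in_Omega by blast
    ultimately have "norm d \<le> \<zeta> s * \<kappa>1 + \<eta> s * (CARD('h) * \<kappa>2 * \<kappa>3)"
      unfolding d_def using zeta_range[of s] eta_range[of s]
      by (intro order_trans[OF norm_triangle_ineq] add_mono) (simp_all add: mult_left_mono)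
    also have "\<dots> \<le> \<eta> s * \<kappa>1 + \<eta> s * (CARD('h) * \<kappa>2 * \<kappa>3)"
      using zeta_le_eta[of s] kappa_nonneg by (simp add: mult_right_mono)
    finally show ?thesis by (simp add: algebra_simps)
  qed
  finally show ?thesis using mu_pos by (simp add: field_simps)
qed

lemma y_step_error:
  assumes i: "i < n"
  shows "norm (y i (Suc s) - (\<Sum>l<n. a i l s *\<^sub>R y l s)) \<le> 2 * \<kappa>2 * \<eta> s"
proof -
  define w where "w = (\<Sum>l<n. a i l s *\<^sub>R y l s)"
  have "\<And>k. 0 \<le> w $ k" unfolding w_def
    using y_nonneg_bounded a_nonneg by (simp, intro sum_nonneg mult_nonneg_nonneg) auto
  then have "norm (y i (Suc s) - w) \<le> \<eta> s * (norm w + norm (g i s (x i s)))"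
    unfolding y_step[OF i] sum_in_neighbours w_def[symmetric]
    by (rule norm_pospart_convex_comb_diff_le) (use eta_range in auto)
  also have "\<dots> \<le> \<eta> s * (\<kappa>2 + \<kappa>2)"
    using y_nonneg_bounded kappa2[OF i x_in_Omega[OF i]] eta_range[of s]
    unfolding w_def by (intro mult_left_mono add_mono norm_average_le[OF i]) auto
  finally show ?thesis by (simp add: w_def algebra_simps)
qed

lemma x_consensus_error:
  assumes i: "i < n"
  shows "norm (x i t - xbar t) \<le> n / (1 - \<delta>)\<^sup>2 *
           (\<kappa> * lm ^ t + (\<kappa>1 + CARD('h) * \<kappa>2 * \<kappa>3) / (\<mu> * lm) * (\<Sum>s=0..t. lm ^ (t - s) * \<eta> s))"
proof -
  define K where "K = (\<kappa>1 + CARD('h) * \<kappa>2 * \<kappa>3) / \<mu>"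
  have K: "0 \<le> K" unfolding K_def using kappa_nonneg mu_pos by simp
  have "(\<Sum>s<t. lm ^ (t - Suc s) * (\<eta> s * K)) = K * (\<Sum>s<t. lm ^ (t - Suc s) * \<eta> s)"
    by (simp add: sum_distrib_left ac_simps)
  also have "\<dots> \<le> K * ((\<Sum>s=0..t. lm ^ (t - s) * \<eta> s) / lm)"
    using K lam_pos eta_nonneg by (intro mult_left_mono sum_discount_shift_le) auto
  finally have "lm ^ t * \<kappa> + (\<Sum>s<t. lm ^ (t - Suc s) * (\<eta> s * K))
      \<le> \<kappa> * lm ^ t + K / lm * (\<Sum>s=0..t. lm ^ (t - s) * \<eta> s)"
    by (simp add: mult.commute)
  then have "n / (1 - \<delta>)\<^sup>2 * (lm ^ t * \<kappa> + (\<Sum>s<t. lm ^ (t - Suc s) * (\<eta> s * K)))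
      \<le> n / (1 - \<delta>)\<^sup>2 * (\<kappa> * lm ^ t + K / lm * (\<Sum>s=0..t. lm ^ (t - s) * \<eta> s))"
    by (rule mult_left_mono) simp
  moreover have "norm (x i t - xbar t) \<le> n / (1 - \<delta>)\<^sup>2 * (lm ^ t * \<kappa> + (\<Sum>s<t. lm ^ (t - Suc s) * (\<eta> s * K)))"
    unfolding xbar_def K_def
    by (rule perturbed_consensus_deviation[where e = "\<lambda>i s. x i (Suc s) - (\<Sum>l<n. a i l s *\<^sub>R x l s)"])
      (use i x_step_error kappa x0 in \<open>auto simp: mult.assoc\<close>)
  ultimately show ?thesis by (simp add: K_def)
qed

lemma y_consensus_error:
  assumes i: "i < n"
  shows "norm (y i t - ybar t) \<le> n / (1 - \<delta>)\<^sup>2 * (2 * \<kappa>2 * (\<Sum>s<t. lm ^ (t - Suc s) * \<eta> s))"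
proof -
  have "norm (y i t - ybar t) \<le> n / (1 - \<delta>)\<^sup>2 * (lm ^ t * 0 + (\<Sum>s<t. lm ^ (t - Suc s) * (2 * \<kappa>2 * \<eta> s)))"
    unfolding ybar_def
    by (rule perturbed_consensus_deviation[where e = "\<lambda>i s. y i (Suc s) - (\<Sum>l<n. a i l s *\<^sub>R y l s)"])
      (use i y_step_error y0 in auto)
  then show ?thesis by (simp add: sum_distrib_left ac_simps)
qed

lemma x_consensus_bound:
  defines "N \<equiv> real n" and "m \<equiv> real CARD('m)" and "h \<equiv> real CARD('h)" and "C \<equiv> Cconst \<gamma> n U"
  defines "\<rho>1 \<equiv> sqrt m * N * \<kappa> * C"
    and "\<rho>2 \<equiv> (sqrt m * N powr (3/2) * h * \<kappa>2 * \<kappa>3 * C + sqrt m * N * \<kappa>1 * C) / (\<mu> * lm)"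
  assumes i: "i < n"
  shows "norm (x i t - xbar t) \<le> \<rho>1 * lm ^ t + \<rho>2 * (\<Sum>s=0..t. lm ^ (t - s) * \<eta> s)"
proof -
  define D where "D = N / (1 - \<delta>)\<^sup>2"
  define S where "S = (\<Sum>s=0..t. lm ^ (t - s) * \<eta> s)"
  have N: "1 \<le> N" "1 \<le> sqrt N" and m: "1 \<le> sqrt m" and C: "0 \<le> C"
    using n2 Cconst_pos by (simp_all add: N_def m_def C_def)
  have "D \<le> N * C"
    unfolding D_def N_def C_def by (rule n_div_one_minus_delta_sq_le_Cconst)
  also have "\<dots> \<le> sqrt m * N * C"
    using m N C by (intro mult_right_mono) auto
  finally have D: "D \<le> sqrt m * N * C" .
  have "D * \<kappa> \<le> \<rho>1"
    using mult_right_mono[OF D kappa_nonneg(1)] by (simp add: \<rho>1_def ac_simps)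
  moreover have "D * ((\<kappa>1 + h * \<kappa>2 * \<kappa>3) / (\<mu> * lm)) \<le> \<rho>2"
  proof -
    have "\<rho>2 = sqrt m * N * C * (\<kappa>1 + sqrt N * h * \<kappa>2 * \<kappa>3) / (\<mu> * lm)"
      unfolding \<rho>2_def N_def using powr_three_halves[of "real n"] by (simp add: algebra_simps)
    moreover have "\<kappa>1 + h * \<kappa>2 * \<kappa>3 \<le> \<kappa>1 + sqrt N * h * \<kappa>2 * \<kappa>3"
      using N kappa_nonneg mult_right_mono[of 1 "sqrt N" "h * \<kappa>2 * \<kappa>3"] by (simp add: h_def mult.assoc)
    then have "D * (\<kappa>1 + h * \<kappa>2 * \<kappa>3) \<le> sqrt m * N * C * (\<kappa>1 + sqrt N * h * \<kappa>2 * \<kappa>3)"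
      using D N m C kappa_nonneg by (intro mult_mono) (auto simp: h_def)
    ultimately show ?thesis
      using mu_pos lam_pos divide_right_mono[of _ _ "\<mu> * lm"] by simp
  qed
  moreover have "0 \<le> S" "0 \<le> lm ^ t"
    unfolding S_def using lam_pos eta_nonneg by (auto intro!: sum_nonneg)
  ultimately have "D * \<kappa> * lm ^ t + D * ((\<kappa>1 + h * \<kappa>2 * \<kappa>3) / (\<mu> * lm)) * S \<le> \<rho>1 * lm ^ t + \<rho>2 * S"
    by (intro add_mono mult_right_mono)
  moreover have "norm (x i t - xbar t) \<le> D * (\<kappa> * lm ^ t + (\<kappa>1 + h * \<kappa>2 * \<kappa>3) / (\<mu> * lm) * S)"
    unfolding D_def N_def h_def S_def by (rule x_consensus_error[OF i])
  ultimately show ?thesis by (simp add: S_def algebra_simps)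
qed

text \<open>\<open>\<rho>3\<close> and \<open>\<rho>4\<close> are \<open>\<rho>1\<^sup>2 + 2 * \<rho>1 * \<rho>2 / (1 - lm)\<close> and \<open>\<rho>2\<^sup>2 / (1 - lm)\<close> for the
  constants \<open>\<rho>1\<close>, \<open>\<rho>2\<close> of \<open>x_consensus_bound\<close>.\<close>

lemma x_consensus_sq_bound:
  defines "N \<equiv> real n" and "m \<equiv> real CARD('m)" and "h \<equiv> real CARD('h)" and "C \<equiv> Cconst \<gamma> n U"
  defines "\<rho>3 \<equiv> m * N\<^sup>2 * \<kappa>\<^sup>2 * C\<^sup>2
                  + (2 * m * N powr (5/2) * h * \<kappa> * \<kappa>2 * \<kappa>3 * C\<^sup>2 + 2 * m * N\<^sup>2 * \<kappa> * \<kappa>1 * C\<^sup>2)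
                    / (\<mu> * lm * (1 - lm))"
    and "\<rho>4 \<equiv> m * (N powr (3/2) * h * \<kappa>2 * \<kappa>3 * C + N * \<kappa>1 * C)\<^sup>2 / (\<mu>\<^sup>2 * lm\<^sup>2 * (1 - lm))"
  assumes i: "i < n"
  shows "(norm (x i t - xbar t))\<^sup>2 \<le> \<rho>3 * lm ^ t + \<rho>4 * (\<Sum>s=0..t. lm ^ (t - s) * (\<eta> s)\<^sup>2)"
proof -
  define X where "X = N * \<kappa> * C"
  define Y where "Y = (N powr (3/2) * h * \<kappa>2 * \<kappa>3 * C + N * \<kappa>1 * C) / (\<mu> * lm)"
  have X: "0 \<le> X" and Y: "0 \<le> Y"
    using kappa_nonneg Cconst_pos mu_pos lam_pos by (simp_all add: X_def Y_def N_def C_def h_def)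
  have m: "0 \<le> sqrt m" and m2: "sqrt m * sqrt m = m" by (simp_all add: m_def)
  have "norm (x i t - xbar t) \<le> sqrt m * X * lm ^ t + sqrt m * Y * (\<Sum>s=0..t. lm ^ (t - s) * \<eta> s)"
    using x_consensus_bound[OF i]
    by (simp add: X_def Y_def N_def m_def h_def C_def add_divide_distrib algebra_simps)
  then have "(norm (x i t - xbar t))\<^sup>2
      \<le> ((sqrt m * X)\<^sup>2 + 2 * (sqrt m * X) * (sqrt m * Y) / (1 - lm)) * lm ^ t
        + (sqrt m * Y)\<^sup>2 / (1 - lm) * (\<Sum>s=0..t. lm ^ (t - s) * (\<eta> s)\<^sup>2)"
    by (rule square_le_of_discount_bound[OF norm_ge_zero])
      (use X Y m lam_pos lam_less_1 eta_nonneg eta_range in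
        \<open>auto intro!: sum_discount_le_of_le_one sum_discount_square_le sum_nonneg\<close>)
  also have "(sqrt m * X)\<^sup>2 + 2 * (sqrt m * X) * (sqrt m * Y) / (1 - lm) = m * X\<^sup>2 + 2 * m * X * Y / (1 - lm)"
    using m2 by (simp add: power_mult_distrib mult_ac)
  also have "\<dots> = \<rho>3"
    unfolding \<rho>3_def X_def Y_def N_def using powr_five_halves[of "real n"]
    by (simp add: power2_eq_square field_simps)
  also have "(sqrt m * Y)\<^sup>2 / (1 - lm) = \<rho>4"
    unfolding \<rho>4_def Y_def by (simp add: power_mult_distrib power_divide m_def)
  finally show ?thesis .
qed

lemma x_step_bound:
  defines "N \<equiv> real n" and "m \<equiv> real CARD('m)" and "h \<equiv> real CARD('h)" and "C \<equiv> Cconst \<gamma> n U"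
  defines "\<rho>1 \<equiv> sqrt m * N * \<kappa> * C"
    and "\<rho>2 \<equiv> (sqrt m * N powr (3/2) * h * \<kappa>2 * \<kappa>3 * C + sqrt m * N * \<kappa>1 * C) / (\<mu> * lm)"
    and "\<rho>5 \<equiv> (sqrt N * h * \<kappa>2 * \<kappa>3 + \<kappa>1) / \<mu>"
  assumes i: "i < n"
  shows "norm (x i (Suc t) - x i t) \<le> 2 * \<rho>1 * lm ^ t + 2 * \<rho>2 * (\<Sum>s=0..t. lm ^ (t - s) * \<eta> s) + \<rho>5 * \<eta> t"
proof -
  define z where "z = (\<Sum>l<n. a i l t *\<^sub>R x l t)"
  define B where "B = \<rho>1 * lm ^ t + \<rho>2 * (\<Sum>s=0..t. lm ^ (t - s) * \<eta> s)"
  have dev: "norm (x l t - xbar t) \<le> B" if "l < n" for l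
    using x_consensus_bound[OF that] by (simp add: B_def \<rho>1_def \<rho>2_def N_def m_def h_def C_def)
  have "norm (z - xbar t) \<le> B"
    unfolding z_def average_minus[OF i] using dev by (rule norm_average_le[OF i])
  moreover have "norm (x i (Suc t) - z) \<le> \<rho>5 * \<eta> t"
  proof -
    have "\<kappa>1 + h * \<kappa>2 * \<kappa>3 \<le> sqrt N * h * \<kappa>2 * \<kappa>3 + \<kappa>1"
      using n2 kappa_nonneg mult_right_mono[of 1 "sqrt N" "h * \<kappa>2 * \<kappa>3"]
      by (simp add: N_def h_def mult.assoc)
    then have "\<eta> t * (\<kappa>1 + h * \<kappa>2 * \<kappa>3) / \<mu> \<le> \<rho>5 * \<eta> t"
      unfolding \<rho>5_def using mu_pos eta_nonneg
      by (simp add: divide_right_mono mult_left_mono mult.commute)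
    then show ?thesis using x_step_error[OF i, of t] by (simp add: z_def h_def)
  qed
  moreover have "norm (x i (Suc t) - x i t) \<le> norm (x i (Suc t) - z) + norm (z - xbar t) + norm (x i t - xbar t)"
    using norm_triangle_ineq[of "x i (Suc t) - z" "z - xbar t"] norm_triangle_ineq4[of "x i (Suc t) - xbar t" "x i t - xbar t"]
    by simp
  ultimately show ?thesis using dev[OF i] by (simp add: B_def)
qed

lemma y_consensus_bound:
  defines "N \<equiv> real n" and "h \<equiv> real CARD('h)" and "C \<equiv> Cconst \<gamma> n U"
  defines "\<rho>6 \<equiv> (sqrt h * N powr (3/2) * C * \<kappa>2 + sqrt h * N * C * \<kappa>2) / lm"
  assumes i: "i < n"
  shows "norm (y i t - ybar t) \<le> \<rho>6 * (\<Sum>s=0..t. lm ^ (t - s) * \<eta> s)"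
proof -
  define T where "T = (\<Sum>s<t. lm ^ (t - Suc s) * \<eta> s)"
  have N: "1 \<le> sqrt N" "0 \<le> N" and h: "1 \<le> sqrt h" and C: "0 \<le> C"
    using n2 Cconst_pos by (simp_all add: N_def h_def C_def)
  have "2 * (N / (1 - \<delta>)\<^sup>2) * \<kappa>2 \<le> (sqrt N + 1) * (N * C) * \<kappa>2"
    using n_div_one_minus_delta_sq_le_Cconst N kappa_nonneg
    by (intro mult_mono mult_right_mono) (auto simp: N_def C_def)
  also have "\<dots> \<le> sqrt h * ((sqrt N + 1) * (N * C) * \<kappa>2)"
    using N h C kappa_nonneg mult_right_mono[of 1 "sqrt h"] by simp
  also have "\<dots> = \<rho>6 * lm"
    unfolding \<rho>6_def N_def using powr_three_halves[of "real n"] lam_pos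
    by (simp add: field_simps)
  finally have c: "2 * (N / (1 - \<delta>)\<^sup>2) * \<kappa>2 \<le> \<rho>6 * lm" .
  have T: "0 \<le> T" "T \<le> (\<Sum>s=0..t. lm ^ (t - s) * \<eta> s) / lm"
    unfolding T_def using lam_pos eta_nonneg by (auto intro!: sum_nonneg sum_discount_shift_le)
  have "norm (y i t - ybar t) \<le> 2 * (N / (1 - \<delta>)\<^sup>2) * \<kappa>2 * T"
    using y_consensus_error[OF i, of t] by (simp add: N_def T_def mult_ac)
  also have "\<dots> \<le> \<rho>6 * lm * ((\<Sum>s=0..t. lm ^ (t - s) * \<eta> s) / lm)"
  proof (rule mult_mono[OF c T(2) _ T(1)])
    show "0 \<le> \<rho>6 * lm" using N kappa_nonneg by (intro order_trans[OF _ c]) simp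
  qed
  finally show ?thesis using lam_pos by simp
qed

text \<open>Since \<open>\<rho>7 = \<rho>6\<^sup>2\<close>, squaring \<open>y_consensus_bound\<close> would lose a factor \<open>1 / (1 - lm)\<close>;
  the bound of \<open>y_consensus_error\<close> is squared instead.\<close>

lemma y_consensus_sq_bound:
  defines "N \<equiv> real n" and "h \<equiv> real CARD('h)" and "C \<equiv> Cconst \<gamma> n U"
  defines "\<rho>7 \<equiv> h * (N powr (3/2) * C * \<kappa>2 + N * C * \<kappa>2)\<^sup>2 / lm\<^sup>2"
  assumes i: "i < n"
  shows "(norm (y i t - ybar t))\<^sup>2 \<le> \<rho>7 * (\<Sum>s=0..t. lm ^ (t - s) * (\<eta> s)\<^sup>2)"
proof -
  define D where "D = 1 / (1 - \<delta>)\<^sup>2"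
  define S where "S = (\<Sum>s=0..t. lm ^ (t - s) * (\<eta> s)\<^sup>2)"
  have N: "1 \<le> sqrt N" "0 \<le> N" and h: "1 \<le> h" and S: "0 \<le> S"
    using n2 lam_pos unfolding N_def h_def S_def by (auto intro!: sum_nonneg)
  have "4 * (D\<^sup>2 * lm) \<le> (h * (sqrt N + 1)\<^sup>2) * (C\<^sup>2 * (1 - lm))"
  proof (rule mult_mono)
    show "4 \<le> h * (sqrt N + 1)\<^sup>2"
      using N h power_mono[of 2 "sqrt N + 1" 2] mult_mono[of 1 h 4 "(sqrt N + 1)\<^sup>2"] by simp
  qed (use inverse_one_minus_delta_sq_sq_le_Cconst_sq lam_pos h in \<open>auto simp: D_def C_def\<close>)
  then have "(4 * D\<^sup>2 * lm) / (lm\<^sup>2 * (1 - lm)) \<le> (h * (sqrt N + 1)\<^sup>2 * C\<^sup>2 * (1 - lm)) / (lm\<^sup>2 * (1 - lm))"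
    using lam_pos lam_less_1 by (intro divide_right_mono) (auto simp: mult_ac)
  also have "\<dots> = h * (sqrt N + 1)\<^sup>2 * C\<^sup>2 / lm\<^sup>2" using lam_less_1 by simp
  finally have "(N\<^sup>2 * \<kappa>2\<^sup>2) * ((4 * D\<^sup>2 * lm) / (lm\<^sup>2 * (1 - lm)))
      \<le> (N\<^sup>2 * \<kappa>2\<^sup>2) * (h * (sqrt N + 1)\<^sup>2 * C\<^sup>2 / lm\<^sup>2)"
    by (rule mult_left_mono) simp
  moreover have "(2 * (N * D) * \<kappa>2)\<^sup>2 / (lm * (1 - lm)) = (N\<^sup>2 * \<kappa>2\<^sup>2) * ((4 * D\<^sup>2 * lm) / (lm\<^sup>2 * (1 - lm)))"
    using lam_pos lam_less_1 by (simp add: field_simps power2_eq_square)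
  moreover have "\<rho>7 = (N\<^sup>2 * \<kappa>2\<^sup>2) * (h * (sqrt N + 1)\<^sup>2 * C\<^sup>2 / lm\<^sup>2)"
    unfolding \<rho>7_def N_def using powr_three_halves[of "real n"] by (simp add: field_simps power2_eq_square)
  ultimately have "(2 * (N * D) * \<kappa>2)\<^sup>2 / (lm * (1 - lm)) \<le> \<rho>7" by simp
  moreover have "norm (y i t - ybar t) \<le> 2 * (N * D) * \<kappa>2 * (\<Sum>s<t. lm ^ (t - Suc s) * \<eta> s)"
    using y_consensus_error[OF i, of t] by (simp add: N_def D_def mult_ac)
  then have "(norm (y i t - ybar t))\<^sup>2 \<le> (2 * (N * D) * \<kappa>2)\<^sup>2 * (\<Sum>s<t. lm ^ (t - Suc s) * \<eta> s)\<^sup>2"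
    unfolding power_mult_distrib[symmetric] by (rule power_mono) simp
  moreover have "(\<Sum>s<t. lm ^ (t - Suc s) * \<eta> s)\<^sup>2 \<le> S / (lm * (1 - lm))"
    unfolding S_def using lam_pos lam_less_1 by (rule sum_discount_shift_square_le)
  ultimately have "(norm (y i t - ybar t))\<^sup>2 \<le> (2 * (N * D) * \<kappa>2)\<^sup>2 * (S / (lm * (1 - lm)))"
    by (meson order_trans mult_left_mono zero_le_power2)
  also have "\<dots> = (2 * (N * D) * \<kappa>2)\<^sup>2 / (lm * (1 - lm)) * S" by simp
  also have "\<dots> \<le> \<rho>7 * S"
    using \<open>(2 * (N * D) * \<kappa>2)\<^sup>2 / (lm * (1 - lm)) \<le> \<rho>7\<close> S by (rule mult_right_mono)
  finally show ?thesis unfolding S_def .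
qed

end

theorem lemma5:
  fixes n U T :: nat
    and \<gamma> \<mu> \<kappa> \<kappa>1 \<kappa>2 \<kappa>3 :: real
    and E :: "nat \<Rightarrow> (nat \<times> nat) set"
    and a :: "nat \<Rightarrow> nat \<Rightarrow> nat \<Rightarrow> real"
    and \<Omega> :: "(real ^ 'm) set"
    and f :: "nat \<Rightarrow> nat \<Rightarrow> real ^ 'm \<Rightarrow> real ^ 'm \<Rightarrow> real"
    and df :: "nat \<Rightarrow> nat \<Rightarrow> real ^ 'm \<Rightarrow> real ^ 'm \<Rightarrow> real ^ 'm"
    and g :: "nat \<Rightarrow> nat \<Rightarrow> real ^ 'm \<Rightarrow> real ^ 'h"
    and dg :: "nat \<Rightarrow> nat \<Rightarrow> 'h \<Rightarrow> real ^ 'm \<Rightarrow> real ^ 'm"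
    and \<phi> :: "real ^ 'm \<Rightarrow> real"
    and d\<phi> :: "real ^ 'm \<Rightarrow> real ^ 'm"
    and \<zeta> \<eta> :: "nat \<Rightarrow> real"
    and x :: "nat \<Rightarrow> nat \<Rightarrow> real ^ 'm"
    and y :: "nat \<Rightarrow> nat \<Rightarrow> real ^ 'h"
  assumes n2: "n \<ge> 2"
    and gamma_pos: "\<gamma> > 0"
    and E_sub: "\<And>t. E t \<subseteq> {..<n} \<times> {..<n}"
    and a_edge: "\<And>t i j. (j, i) \<in> E t \<Longrightarrow> \<gamma> \<le> a i j t \<and> a i j t \<le> 1"
    and a_nonedge: "\<And>t i j. (j, i) \<notin> E t \<Longrightarrow> a i j t = 0"
    and self_loop: "\<And>t i. i < n \<Longrightarrow> (i, i) \<in> E t"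
    and U_pos: "U > 0"
    and conn: "\<And>t. strongly_connected {..<n} (\<Union>k\<in>{t * U..<(t + 1) * U}. E k)"
    and row_stoch: "\<And>t i. i < n \<Longrightarrow> (\<Sum>j<n. a i j t) = 1"
    and col_stoch: "\<And>t j. j < n \<Longrightarrow> (\<Sum>i<n. a i j t) = 1"
    and f_cvx: "\<And>i t u. i < n \<Longrightarrow> u \<in> \<Omega> \<Longrightarrow> convex_on \<Omega> (f i t u)"
    and f_grad: "\<And>i t u v. i < n \<Longrightarrow> u \<in> \<Omega> \<Longrightarrow> v \<in> \<Omega> \<Longrightarrow>
        (f i t u has_derivative (\<lambda>w. inner (df i t u v) w)) (at v within \<Omega>)"
    and g_cvx: "\<And>i t k. i < n \<Longrightarrow> convex_on \<Omega> (\<lambda>u. g i t u $ k)"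
    and g_grad: "\<And>i t k u. i < n \<Longrightarrow> u \<in> \<Omega> \<Longrightarrow>
        ((\<lambda>w. g i t w $ k) has_derivative (\<lambda>w. inner (dg i t k u) w)) (at u within \<Omega>)"
    and Omega_convex: "convex \<Omega>"
    and Omega_compact: "compact \<Omega>"
    and X_nonempty: "\<And>t. \<exists>u\<in>\<Omega>. \<forall>k. (\<Sum>i<n. g i t u $ k) \<le> 0"
    and kappa: "\<And>u. u \<in> \<Omega> \<Longrightarrow> norm u \<le> \<kappa>"
    and kappa1: "\<And>i t u v. i < n \<Longrightarrow> u \<in> \<Omega> \<Longrightarrow> v \<in> \<Omega> \<Longrightarrow> norm (df i t u v) \<le> \<kappa>1"
    and kappa2: "\<And>i t u. i < n \<Longrightarrow> u \<in> \<Omega> \<Longrightarrow> norm (g i t u) \<le> \<kappa>2"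
    and kappa3: "\<And>i t k u. i < n \<Longrightarrow> u \<in> \<Omega> \<Longrightarrow> norm (dg i t k u) \<le> \<kappa>3"
    and phi_diff: "\<And>u. (\<phi> has_derivative (\<lambda>w. inner (d\<phi> u) w)) (at u)"
    and mu_pos: "\<mu> > 0"
    and phi_sc: "strongly_convex \<mu> \<phi>"
    and zeta_range: "\<And>t. 0 < \<zeta> t \<and> \<zeta> t \<le> 1"
    and eta_range: "\<And>t. 0 < \<eta> t \<and> \<eta> t \<le> 1"
    and zeta_le_eta: "\<And>t. \<zeta> t \<le> \<eta> t"
    and zeta_noninc: "\<And>t. \<zeta> (Suc t) \<le> \<zeta> t"
    and eta_noninc: "\<And>t. \<eta> (Suc t) \<le> \<eta> t"
    and x0: "\<And>i. i < n \<Longrightarrow> x i 0 \<in> \<Omega>"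
    and y0: "\<And>i. i < n \<Longrightarrow> y i 0 = 0"
    and x_step: "\<And>i t. i < n \<Longrightarrow>
        x i (Suc t) \<in> \<Omega> \<and>
        (\<forall>w\<in>\<Omega>.
          bregman \<phi> d\<phi> (x i (Suc t)) (\<Sum>j\<in>{j. (j, i) \<in> E t}. a i j t *\<^sub>R x j t)
            + inner (\<zeta> t *\<^sub>R df i t (x i t) (x i t)
                     + \<eta> t *\<^sub>R (\<Sum>k\<in>UNIV. (y i t $ k) *\<^sub>R dg i t k (x i t))) (x i (Suc t))
          \<le> bregman \<phi> d\<phi> w (\<Sum>j\<in>{j. (j, i) \<in> E t}. a i j t *\<^sub>R x j t)
            + inner (\<zeta> t *\<^sub>R df i t (x i t) (x i t)
                     + \<eta> t *\<^sub>R (\<Sum>k\<in>UNIV. (y i t $ k) *\<^sub>R dg i t k (x i t))) w)"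
    and y_step: "\<And>i t. i < n \<Longrightarrow>
        y i (Suc t) = pospart ((1 - \<eta> t) *\<^sub>R (\<Sum>j\<in>{j. (j, i) \<in> E t}. a i j t *\<^sub>R y j t)
                                + \<eta> t *\<^sub>R g i t (x i t))"
  shows "let m = real CARD('m); h = real CARD('h); N = real n;
             lm = lam \<gamma> n U; C = Cconst \<gamma> n U;
             xbar = (\<lambda>t. (1 / N) *\<^sub>R (\<Sum>i<n. x i t));
             ybar = (\<lambda>t. (1 / N) *\<^sub>R (\<Sum>i<n. y i t));
             S1 = (\<lambda>t. \<Sum>s=0..t. lm ^ (t - s) * \<eta> s);
             S2 = (\<lambda>t. \<Sum>s=0..t. lm ^ (t - s) * (\<eta> s)\<^sup>2);
             \<rho>1 = sqrt m * N * \<kappa> * C;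
             \<rho>2 = (sqrt m * N powr (3/2) * h * \<kappa>2 * \<kappa>3 * C + sqrt m * N * \<kappa>1 * C) / (\<mu> * lm);
             \<rho>3 = m * N\<^sup>2 * \<kappa>\<^sup>2 * C\<^sup>2
                  + (2 * m * N powr (5/2) * h * \<kappa> * \<kappa>2 * \<kappa>3 * C\<^sup>2 + 2 * m * N\<^sup>2 * \<kappa> * \<kappa>1 * C\<^sup>2)
                    / (\<mu> * lm * (1 - lm));
             \<rho>4 = m * (N powr (3/2) * h * \<kappa>2 * \<kappa>3 * C + N * \<kappa>1 * C)\<^sup>2 / (\<mu>\<^sup>2 * lm\<^sup>2 * (1 - lm));
             \<rho>5 = (sqrt N * h * \<kappa>2 * \<kappa>3 + \<kappa>1) / \<mu>;
             \<rho>6 = (sqrt h * N powr (3/2) * C * \<kappa>2 + sqrt h * N * C * \<kappa>2) / lm;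
             \<rho>7 = h * (N powr (3/2) * C * \<kappa>2 + N * C * \<kappa>2)\<^sup>2 / lm\<^sup>2
         in \<forall>i<n. \<forall>t\<in>{1..T}.
              norm (x i t - xbar t) \<le> \<rho>1 * lm ^ t + \<rho>2 * S1 t
            \<and> (norm (x i t - xbar t))\<^sup>2 \<le> \<rho>3 * lm ^ t + \<rho>4 * S2 t
            \<and> norm (x i (Suc t) - x i t) \<le> 2 * \<rho>1 * lm ^ t + 2 * \<rho>2 * S1 t + \<rho>5 * \<eta> t
            \<and> norm (y i t - ybar t) \<le> \<rho>6 * S1 t
            \<and> (norm (y i t - ybar t))\<^sup>2 \<le> \<rho>7 * S2 t"
proof -
  interpret distributed_primal_dual n U \<gamma> E a \<Omega> df g dg \<phi> d\<phi> \<zeta> \<eta> x y \<mu> \<kappa> \<kappa>1 \<kappa>2 \<kappa>3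
    by unfold_locales
      (fact n2 gamma_pos E_sub a_edge a_nonedge self_loop U_pos conn row_stoch col_stoch
        Omega_convex kappa kappa1 kappa2 kappa3 phi_diff mu_pos phi_sc zeta_range eta_range
        zeta_le_eta x0 y0 x_step y_step)+
  show ?thesis
    unfolding Let_def
    using x_consensus_bound x_consensus_sq_bound x_step_bound y_consensus_bound y_consensus_sq_bound
    by (simp add: xbar_def ybar_def)
qed

end
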